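(* Let $F\colon\mathbf{PBoolean}^{\mathrm{op}}\to\mathbf{Loc}$ be any functor whose restriction to boolean algebras is naturally isomorphic to the Stone spectrum functor $B\mapsto\mathrm{Idl}(B)$. Then $F(\mathrm{Proj}(M_n(\mathbb{C})))$ is the trivial locale for every $n\ge 3$.
   Context: A partial boolean algebra is a set $A$ with a reflexive symmetric relation $\odot$ (commeasurability), elements $0,1$ commeasurable with everything, a total unary operation $\neg$, and binary operations $\wedge,\vee$ defined on commeasurable pairs, such that every set of pairwise commeasurable elements is contained in a set of pairwise commeasurable elements which is closed under the operations and forms a boolean algebra under them. $\mathbf{PBoolean}$ is the category of partial boolean algebras with maps preserving commeasurability and the (partial) operations. Boolean algebras are the partial boolean algebras in which all pairs are commeasurable. $\mathrm{Proj}(M_n(\mathbb{C}))$ is the partial boolean algebra of projections $p=p^*=p^2$ in the $n\times n$ complex matrices, with $p\odot q$ iff $pq=qp$, $\neg p=1-p$, $p\wedge q=pq$, $p\vee q=p+q-pq$. The Stone spectrum of a boolean algebra $B$ is the locale whose frame is the frame $\mathrm{Idl}(B)$ of ideals of $B$. $\mathbf{Loc}$ is the category of locales; a locale is trivial if its frame satisfies $0=1$. *)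

theory Defs
  imports "HOL-Library.FuncSet" "Jordan_Normal_Form.Matrix"
begin

record 'a pba =
  pcarrier :: "'a set"
  pcomm :: "'a \<Rightarrow> 'a \<Rightarrow> bool"
  pzero :: 'a
  pone :: 'a
  pneg :: "'a \<Rightarrow> 'a"
  pmeet :: "'a \<Rightarrow> 'a \<Rightarrow> 'a"
  pjoin :: "'a \<Rightarrow> 'a \<Rightarrow> 'a"

definition is_BA_on :: "('a, 'b) pba_scheme \<Rightarrow> 'a set \<Rightarrow> bool" where
  "is_BA_on A T \<longleftrightarrow>
     T \<subseteq> pcarrier A \<and>
     (\<forall>x\<in>T. \<forall>y\<in>T. pcomm A x y) \<and>
     pzero A \<in> T \<and> pone A \<in> T \<and>
     (\<forall>x\<in>T. pneg A x \<in> T) \<and>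
     (\<forall>x\<in>T. \<forall>y\<in>T. pmeet A x y \<in> T \<and> pjoin A x y \<in> T) \<and>
     (\<forall>x\<in>T. \<forall>y\<in>T. pmeet A x y = pmeet A y x \<and> pjoin A x y = pjoin A y x) \<and>
     (\<forall>x\<in>T. \<forall>y\<in>T. \<forall>z\<in>T.
        pmeet A x (pjoin A y z) = pjoin A (pmeet A x y) (pmeet A x z) \<and>
        pjoin A x (pmeet A y z) = pmeet A (pjoin A x y) (pjoin A x z)) \<and>
     (\<forall>x\<in>T. pmeet A x (pone A) = x \<and> pjoin A x (pzero A) = x) \<and>
     (\<forall>x\<in>T. pmeet A x (pneg A x) = pzero A \<and> pjoin A x (pneg A x) = pone A)"

definition is_pba :: "('a, 'b) pba_scheme \<Rightarrow> bool" where
  "is_pba A \<longleftrightarrow>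
     pzero A \<in> pcarrier A \<and> pone A \<in> pcarrier A \<and>
     (\<forall>x\<in>pcarrier A. pcomm A x x) \<and>
     (\<forall>x\<in>pcarrier A. \<forall>y\<in>pcarrier A. pcomm A x y \<longrightarrow> pcomm A y x) \<and>
     (\<forall>x\<in>pcarrier A. pcomm A (pzero A) x \<and> pcomm A (pone A) x) \<and>
     (\<forall>x\<in>pcarrier A. pneg A x \<in> pcarrier A) \<and>
     (\<forall>x\<in>pcarrier A. \<forall>y\<in>pcarrier A. pcomm A x y \<longrightarrow>
        pmeet A x y \<in> pcarrier A \<and> pjoin A x y \<in> pcarrier A) \<and>
     (\<forall>S. S \<subseteq> pcarrier A \<longrightarrow> (\<forall>x\<in>S. \<forall>y\<in>S. pcomm A x y) \<longrightarrow>
        (\<exists>T. S \<subseteq> T \<and> is_BA_on A T))"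

definition is_boolean :: "('a, 'b) pba_scheme \<Rightarrow> bool" where
  "is_boolean A \<longleftrightarrow> is_pba A \<and> (\<forall>x\<in>pcarrier A. \<forall>y\<in>pcarrier A. pcomm A x y)"

definition pba_hom :: "('a, 'b) pba_scheme \<Rightarrow> ('c, 'd) pba_scheme \<Rightarrow> ('a \<Rightarrow> 'c) \<Rightarrow> bool" where
  "pba_hom A B f \<longleftrightarrow>
     f \<in> pcarrier A \<rightarrow>\<^sub>E pcarrier B \<and>
     (\<forall>x\<in>pcarrier A. \<forall>y\<in>pcarrier A. pcomm A x y \<longrightarrow> pcomm B (f x) (f y)) \<and>
     f (pzero A) = pzero B \<and> f (pone A) = pone B \<and>
     (\<forall>x\<in>pcarrier A. f (pneg A x) = pneg B (f x)) \<and>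
     (\<forall>x\<in>pcarrier A. \<forall>y\<in>pcarrier A. pcomm A x y \<longrightarrow>
        f (pmeet A x y) = pmeet B (f x) (f y) \<and> f (pjoin A x y) = pjoin B (f x) (f y))"

section \<open>Frames (locales are represented by their frames; locale maps by frame homs
  in the opposite direction)\<close>

record 'f frame =
  fcarrier :: "'f set"
  fle :: "'f \<Rightarrow> 'f \<Rightarrow> bool"

definition is_lub :: "'f frame \<Rightarrow> 'f set \<Rightarrow> 'f \<Rightarrow> bool" where
  "is_lub L X s \<longleftrightarrow> s \<in> fcarrier L \<and> (\<forall>x\<in>X. fle L x s) \<and>
     (\<forall>u\<in>fcarrier L. (\<forall>x\<in>X. fle L x u) \<longrightarrow> fle L s u)"

definition is_glb :: "'f frame \<Rightarrow> 'f set \<Rightarrow> 'f \<Rightarrow> bool" where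
  "is_glb L X s \<longleftrightarrow> s \<in> fcarrier L \<and> (\<forall>x\<in>X. fle L s x) \<and>
     (\<forall>u\<in>fcarrier L. (\<forall>x\<in>X. fle L u x) \<longrightarrow> fle L u s)"

definition fSup :: "'f frame \<Rightarrow> 'f set \<Rightarrow> 'f" where
  "fSup L X = (THE s. is_lub L X s)"

definition fmeet :: "'f frame \<Rightarrow> 'f \<Rightarrow> 'f \<Rightarrow> 'f" where
  "fmeet L a b = (THE s. is_glb L {a, b} s)"

definition fbot :: "'f frame \<Rightarrow> 'f" where "fbot L = fSup L {}"
definition ftop :: "'f frame \<Rightarrow> 'f" where "ftop L = fSup L (fcarrier L)"

definition is_frame :: "'f frame \<Rightarrow> bool" where
  "is_frame L \<longleftrightarrow>
     (\<forall>x\<in>fcarrier L. fle L x x) \<and>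
     (\<forall>x\<in>fcarrier L. \<forall>y\<in>fcarrier L. fle L x y \<longrightarrow> fle L y x \<longrightarrow> x = y) \<and>
     (\<forall>x\<in>fcarrier L. \<forall>y\<in>fcarrier L. \<forall>z\<in>fcarrier L. fle L x y \<longrightarrow> fle L y z \<longrightarrow> fle L x z) \<and>
     (\<forall>X. X \<subseteq> fcarrier L \<longrightarrow> (\<exists>s. is_lub L X s)) \<and>
     (\<forall>a\<in>fcarrier L. \<forall>b\<in>fcarrier L. \<exists>s. is_glb L {a, b} s) \<and>
     (\<forall>a\<in>fcarrier L. \<forall>X. X \<subseteq> fcarrier L \<longrightarrow>
        fmeet L a (fSup L X) = fSup L ((\<lambda>x. fmeet L a x) ` X))"

definition frame_hom :: "'f frame \<Rightarrow> 'g frame \<Rightarrow> ('f \<Rightarrow> 'g) \<Rightarrow> bool" where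
  "frame_hom L M h \<longleftrightarrow>
     h \<in> fcarrier L \<rightarrow> fcarrier M \<and>
     h (ftop L) = ftop M \<and>
     (\<forall>a\<in>fcarrier L. \<forall>b\<in>fcarrier L. h (fmeet L a b) = fmeet M (h a) (h b)) \<and>
     (\<forall>X. X \<subseteq> fcarrier L \<longrightarrow> h (fSup L X) = fSup M (h ` X))"

text \<open>A locale is trivial iff in its frame 0 = 1.\<close>
definition trivial_frame :: "'f frame \<Rightarrow> bool" where
  "trivial_frame L \<longleftrightarrow> fbot L = ftop L"

section \<open>Stone spectrum: the frame of ideals\<close>

definition ideals :: "('a, 'b) pba_scheme \<Rightarrow> 'a set set" where
  "ideals B = {I. I \<subseteq> pcarrier B \<and> pzero B \<in> I \<and>
     (\<forall>a\<in>I. \<forall>b\<in>pcarrier B. pmeet B b a = b \<longrightarrow> b \<in> I) \<and>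
     (\<forall>a\<in>I. \<forall>b\<in>I. pjoin B a b \<in> I)}"

definition Idl :: "('a, 'b) pba_scheme \<Rightarrow> 'a set frame" where
  "Idl B = \<lparr>fcarrier = ideals B, fle = (\<subseteq>)\<rparr>"

text \<open>Action of the Stone spectrum on a morphism f : B \<rightarrow> B' (locale map
  Spec B' \<rightarrow> Spec B), as the frame hom Idl B \<rightarrow> Idl B' sending I to the ideal
  generated by f[I].\<close>
definition Idl_map :: "('a, 'b) pba_scheme \<Rightarrow> ('c, 'd) pba_scheme \<Rightarrow> ('a \<Rightarrow> 'c) \<Rightarrow> 'a set \<Rightarrow> 'c set" where
  "Idl_map B B' f I = {b \<in> pcarrier B'. \<exists>a\<in>I. pmeet B' b (f a) = b}"

section \<open>Functors PBoolean^op \<rightarrow> Loc, i.e. covariant functors into frames\<close>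

definition is_PBool_Loc_functor ::
  "('a pba \<Rightarrow> 'f frame) \<Rightarrow> ('a pba \<Rightarrow> 'a pba \<Rightarrow> ('a \<Rightarrow> 'a) \<Rightarrow> 'f \<Rightarrow> 'f) \<Rightarrow> bool" where
  "is_PBool_Loc_functor F Fm \<longleftrightarrow>
     (\<forall>A. is_pba A \<longrightarrow> is_frame (F A)) \<and>
     (\<forall>A B f. is_pba A \<longrightarrow> is_pba B \<longrightarrow> pba_hom A B f \<longrightarrow> frame_hom (F A) (F B) (Fm A B f)) \<and>
     (\<forall>A. is_pba A \<longrightarrow> (\<forall>x\<in>fcarrier (F A). Fm A A (restrict id (pcarrier A)) x = x)) \<and>
     (\<forall>A B C f g. is_pba A \<longrightarrow> is_pba B \<longrightarrow> is_pba C \<longrightarrow> pba_hom A B f \<longrightarrow> pba_hom B C g \<longrightarrow>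
        (\<forall>x\<in>fcarrier (F A). Fm A C (compose (pcarrier A) g f) x = Fm B C g (Fm A B f x)))"

definition nat_iso_to_Stone ::
  "('a pba \<Rightarrow> 'f frame) \<Rightarrow> ('a pba \<Rightarrow> 'a pba \<Rightarrow> ('a \<Rightarrow> 'a) \<Rightarrow> 'f \<Rightarrow> 'f) \<Rightarrow>
   ('a pba \<Rightarrow> 'f \<Rightarrow> 'a set) \<Rightarrow> bool" where
  "nat_iso_to_Stone F Fm \<eta> \<longleftrightarrow>
     (\<forall>B. is_boolean B \<longrightarrow>
        frame_hom (F B) (Idl B) (\<eta> B) \<and> bij_betw (\<eta> B) (fcarrier (F B)) (ideals B)) \<and>
     (\<forall>B B' f. is_boolean B \<longrightarrow> is_boolean B' \<longrightarrow> pba_hom B B' f \<longrightarrow>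
        (\<forall>x\<in>fcarrier (F B). \<eta> B' (Fm B B' f x) = Idl_map B B' f (\<eta> B x)))"

definition Proj :: "nat \<Rightarrow> complex mat pba" where
  "Proj n = \<lparr>pcarrier = {p \<in> carrier_mat n n.
                (\<forall>i<n. \<forall>j<n. p $$ (i, j) = cnj (p $$ (j, i))) \<and> p * p = p},
            pcomm = (\<lambda>p q. p * q = q * p),
            pzero = 0\<^sub>m n n,
            pone = 1\<^sub>m n,
            pneg = (\<lambda>p. 1\<^sub>m n - p),
            pmeet = (\<lambda>p q. p * q),
            pjoin = (\<lambda>p q. p + q - p * q)\<rparr>"

end

theory Submission
  imports Defs
begin

(*
  Proof plan.  The argument is the frame-valued Kochen--Specker theorem.

  (1) Every functor F extending the Stone spectrum yields a "frame-valued valuation"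
      u : Proj(M_n) \<rightarrow> F(Proj(M_n)): for a projection p, the projections of the double
      commutant of {p} form a boolean algebra B, and u p is the image of the principal
      ideal of p under Idl(B) \<cong> F(B) \<rightarrow> F(Proj(M_n)).  By naturality of the isomorphism
      with Idl, u p may be computed in any such boolean subalgebra containing p, so
      u 0 = \<bottom>, u 1 = \<top> and u preserves meets and joins of commuting projections.

  (2) Any frame carrying such a valuation is trivial when n \<ge> 3.  Writing each
      element as a join of "cells" (meets of u p or u (1 - p) over a finite family of
      projections), the Kochen--Specker configuration of 31 rank-one projections in
      three coordinates (no 0/1-colouring exists) forces every cell below
      u(diag{i,j,k}) to be \<bottom>; hence all diagonal units vanish and \<top> = u 1 = \<bottom>.
*)

section \<open>Commuting idempotents in a ring\<close>

text \<open>The operations of Proj(M_n) are ring expressions; we verify the boolean-algebra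
  identities for commuting idempotents once, in an arbitrary (non-commutative) ring.\<close>

context ring begin

lemmas ring_normalize = minus_eq r_distr l_distr r_minus l_minus a_ac m_assoc minus_add
  minus_minus r_one l_one r_zero l_zero r_neg r_neg1 r_neg2 l_neg

lemma idem_meet_idem:
  assumes c: "p \<in> carrier R" "q \<in> carrier R" and i: "p \<otimes> p = p" "q \<otimes> q = q"
    and m: "p \<otimes> q = q \<otimes> p"
  shows "(p \<otimes> q) \<otimes> (p \<otimes> q) = p \<otimes> q"
proof -
  have "(p \<otimes> q) \<otimes> (p \<otimes> q) = p \<otimes> (q \<otimes> p) \<otimes> q" using c by (simp add: m_assoc)
  also have "\<dots> = p \<otimes> p \<otimes> q \<otimes> q" using c m by (simp add: m_assoc)
  finally show ?thesis using c i by (simp add: m_assoc)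
qed

lemma idem_join_idem:
  assumes c: "p \<in> carrier R" "q \<in> carrier R" and i: "p \<otimes> p = p" "q \<otimes> q = q"
    and m: "p \<otimes> q = q \<otimes> p"
  shows "(p \<oplus> q \<ominus> p \<otimes> q) \<otimes> (p \<oplus> q \<ominus> p \<otimes> q) = p \<oplus> q \<ominus> p \<otimes> q"
proof -
  have a: "p \<otimes> (q \<otimes> p) = p \<otimes> q" "q \<otimes> (p \<otimes> q) = p \<otimes> q"
    using c i m by (metis m_assoc)+
  have h: "\<And>x. x \<in> carrier R \<Longrightarrow> p \<otimes> (p \<otimes> x) = p \<otimes> x" "\<And>x. x \<in> carrier R \<Longrightarrow> q \<otimes> (q \<otimes> x) = q \<otimes> x"
    using c i by (metis m_assoc)+
  have k: "p \<otimes> (q \<otimes> (p \<otimes> q)) = p \<otimes> q" using c i a by (metis m_assoc m_closed)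
  show ?thesis using c apply (simp add: ring_normalize a h i k m[symmetric]) by algebra
qed

lemma idem_compl_idem:
  assumes c: "p \<in> carrier R" and i: "p \<otimes> p = p"
  shows "(\<one> \<ominus> p) \<otimes> (\<one> \<ominus> p) = \<one> \<ominus> p"
  using c apply (simp add: ring_normalize i) by algebra

lemma idem_meet_join_distrib:
  assumes c: "p \<in> carrier R" "q \<in> carrier R" "r \<in> carrier R"
    and i: "p \<otimes> p = p" and m: "p \<otimes> q = q \<otimes> p"
  shows "p \<otimes> (q \<oplus> r \<ominus> q \<otimes> r) = p \<otimes> q \<oplus> p \<otimes> r \<ominus> (p \<otimes> q) \<otimes> (p \<otimes> r)"
proof -
  have "(p \<otimes> q) \<otimes> (p \<otimes> r) = p \<otimes> (q \<otimes> p) \<otimes> r" using c by (simp add: m_assoc)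
  also have "\<dots> = p \<otimes> p \<otimes> q \<otimes> r" using c m by (simp add: m_assoc)
  finally have "(p \<otimes> q) \<otimes> (p \<otimes> r) = p \<otimes> (q \<otimes> r)" using c i by (simp add: m_assoc)
  then show ?thesis using c apply (simp add: ring_normalize) by algebra
qed

lemma idem_join_meet_distrib:
  assumes c: "p \<in> carrier R" "q \<in> carrier R" "r \<in> carrier R"
    and i: "p \<otimes> p = p" and m: "p \<otimes> q = q \<otimes> p" "p \<otimes> r = r \<otimes> p"
  shows "p \<oplus> q \<otimes> r \<ominus> p \<otimes> (q \<otimes> r) = (p \<oplus> q \<ominus> p \<otimes> q) \<otimes> (p \<oplus> r \<ominus> p \<otimes> r)"
proof -
  have a: "p \<otimes> (q \<otimes> p) = p \<otimes> q" using c i m by (metis m_assoc)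
  have b: "q \<otimes> (p \<otimes> r) = p \<otimes> (q \<otimes> r)" using c m by (metis m_assoc)
  have d: "p \<otimes> (q \<otimes> (p \<otimes> r)) = p \<otimes> (q \<otimes> r)" using a c by (metis m_assoc m_closed)
  have h: "\<And>x. x \<in> carrier R \<Longrightarrow> p \<otimes> (p \<otimes> x) = p \<otimes> x" using c i by (metis m_assoc)
  show ?thesis using c apply (simp add: ring_normalize a b d i h m(1)[symmetric]) by algebra
qed

lemma idem_join_comm:
  assumes c: "p \<in> carrier R" "q \<in> carrier R" and m: "p \<otimes> q = q \<otimes> p"
  shows "p \<oplus> q \<ominus> p \<otimes> q = q \<oplus> p \<ominus> q \<otimes> p"
  using c unfolding m by algebra

lemma idem_compl:
  assumes c: "p \<in> carrier R" and i: "p \<otimes> p = p"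
  shows "p \<otimes> (\<one> \<ominus> p) = \<zero>" "p \<oplus> (\<one> \<ominus> p) \<ominus> p \<otimes> (\<one> \<ominus> p) = \<one>"
proof -
  show 1: "p \<otimes> (\<one> \<ominus> p) = \<zero>" using c i by (simp add: ring_normalize)
  show "p \<oplus> (\<one> \<ominus> p) \<ominus> p \<otimes> (\<one> \<ominus> p) = \<one>"
    unfolding 1 using c apply (simp add: ring_normalize) by algebra
qed

lemma idem_units:
  assumes c: "p \<in> carrier R"
  shows "p \<otimes> \<one> = p" "p \<oplus> \<zero> \<ominus> p \<otimes> \<zero> = p"
  using c by (simp_all add: ring_normalize)

text \<open>The order on idempotents is a \<le> p iff a p = a; joins are upper bounds and
  least upper bounds, meets are lower bounds.\<close>

lemma idem_le_join:
  assumes c: "a \<in> carrier R" "p \<in> carrier R" "q \<in> carrier R" and h: "a \<otimes> p = a"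
  shows "a \<otimes> (p \<oplus> q \<ominus> p \<otimes> q) = a"
proof -
  have "a \<otimes> (p \<otimes> q) = a \<otimes> q" using c h by (metis m_assoc)
  then show ?thesis using c h apply (simp add: ring_normalize) by algebra
qed

lemma idem_join_le:
  assumes c: "a \<in> carrier R" "b \<in> carrier R" "p \<in> carrier R" and h: "a \<otimes> p = a" "b \<otimes> p = b"
  shows "(a \<oplus> b \<ominus> a \<otimes> b) \<otimes> p = a \<oplus> b \<ominus> a \<otimes> b"
proof -
  have "a \<otimes> (b \<otimes> p) = a \<otimes> b" using c h by simp
  then show ?thesis using c h apply (simp add: ring_normalize) by algebra
qed

lemma idem_meet_le:
  assumes c: "a \<in> carrier R" "p \<in> carrier R" "q \<in> carrier R" and i: "p \<otimes> p = p"
    and m: "p \<otimes> q = q \<otimes> p" and h: "a \<otimes> (p \<otimes> q) = a"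
  shows "a \<otimes> p = a"
proof -
  have "a \<otimes> p = a \<otimes> (p \<otimes> q) \<otimes> p" using h by simp
  also have "\<dots> = a \<otimes> (p \<otimes> (q \<otimes> p))" using c by (simp add: m_assoc)
  also have "\<dots> = a \<otimes> (p \<otimes> p \<otimes> q)" using c m by (simp add: m_assoc)
  also have "\<dots> = a" using i h by simp
  finally show ?thesis .
qed

lemma commute_closed:
  assumes c: "x \<in> carrier R" "p \<in> carrier R" "q \<in> carrier R"
    and m: "x \<otimes> p = p \<otimes> x" "x \<otimes> q = q \<otimes> x"
  shows "x \<otimes> (p \<otimes> q) = (p \<otimes> q) \<otimes> x"
    "x \<otimes> (p \<oplus> q \<ominus> p \<otimes> q) = (p \<oplus> q \<ominus> p \<otimes> q) \<otimes> x"
    "x \<otimes> (\<one> \<ominus> p) = (\<one> \<ominus> p) \<otimes> x"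
proof -
  show xpq: "x \<otimes> (p \<otimes> q) = (p \<otimes> q) \<otimes> x" using c m by (metis m_assoc)
  then have "x \<otimes> (p \<otimes> q) = p \<otimes> (q \<otimes> x)" using c by (simp add: m_assoc)
  then show "x \<otimes> (p \<oplus> q \<ominus> p \<otimes> q) = (p \<oplus> q \<ominus> p \<otimes> q) \<otimes> x"
    using c m by (simp add: ring_normalize)
  show "x \<otimes> (\<one> \<ominus> p) = (\<one> \<ominus> p) \<otimes> x" using c m by (simp add: ring_normalize)
qed

end

section \<open>Projection matrices\<close>

abbreviation mat_ring :: "nat \<Rightarrow> (complex mat, unit) ring_scheme" where
  "mat_ring n \<equiv> ring_mat TYPE(complex) n ()"

lemma mat_ring_ring: "ring (mat_ring n)"
  by (rule ring_mat)

lemma mat_ring_minus: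
  assumes "A \<in> carrier_mat n n" "B \<in> carrier_mat n n"
  shows "a_minus (mat_ring n) A B = A - B"
proof -
  interpret R: ring "mat_ring n" by (rule mat_ring_ring)
  have "\<ominus>\<^bsub>mat_ring n\<^esub> B = - B"
    by (rule R.minus_equality) (use assms in \<open>auto simp: ring_mat_simps\<close>)
  then show ?thesis
    using assms unfolding a_minus_def by (simp add: ring_mat_simps minus_add_uminus_mat)
qed

lemma square_mult_carrier:
  "A \<in> carrier_mat n n \<Longrightarrow> B \<in> carrier_mat n n \<Longrightarrow> A * B \<in> carrier_mat n n"
  by auto

lemmas mat_ring_to_mat = ring_mat_simps mat_ring_minus add_carrier_mat square_mult_carrier
  minus_carrier_mat zero_carrier_mat one_carrier_mat

lemma mat_meet_idem:
  fixes p q :: "complex mat"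
  assumes "p \<in> carrier_mat n n" "q \<in> carrier_mat n n" "p * p = p" "q * q = q" "p * q = q * p"
  shows "(p * q) * (p * q) = p * q"
  using ring.idem_meet_idem[OF mat_ring_ring, of p n q] assms by (simp add: mat_ring_to_mat)

lemma mat_join_idem:
  fixes p q :: "complex mat"
  assumes "p \<in> carrier_mat n n" "q \<in> carrier_mat n n" "p * p = p" "q * q = q" "p * q = q * p"
  shows "(p + q - p * q) * (p + q - p * q) = p + q - p * q"
  using ring.idem_join_idem[OF mat_ring_ring, of p n q] assms by (simp add: mat_ring_to_mat)

lemma mat_compl_idem:
  fixes p :: "complex mat"
  assumes "p \<in> carrier_mat n n" "p * p = p"
  shows "(1\<^sub>m n - p) * (1\<^sub>m n - p) = 1\<^sub>m n - p"
  using ring.idem_compl_idem[OF mat_ring_ring, of p n] assms by (simp add: mat_ring_to_mat)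

lemma mat_meet_join_distrib:
  fixes p q r :: "complex mat"
  assumes "p \<in> carrier_mat n n" "q \<in> carrier_mat n n" "r \<in> carrier_mat n n"
    "p * p = p" "p * q = q * p"
  shows "p * (q + r - q * r) = p * q + p * r - (p * q) * (p * r)"
  using ring.idem_meet_join_distrib[OF mat_ring_ring, of p n q r] assms by (simp add: mat_ring_to_mat)

lemma mat_join_meet_distrib:
  fixes p q r :: "complex mat"
  assumes "p \<in> carrier_mat n n" "q \<in> carrier_mat n n" "r \<in> carrier_mat n n"
    "p * p = p" "p * q = q * p" "p * r = r * p"
  shows "p + q * r - p * (q * r) = (p + q - p * q) * (p + r - p * r)"
  using ring.idem_join_meet_distrib[OF mat_ring_ring, of p n q r] assms by (simp add: mat_ring_to_mat)

lemma mat_join_comm: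
  fixes p q :: "complex mat"
  assumes "p \<in> carrier_mat n n" "q \<in> carrier_mat n n" "p * q = q * p"
  shows "p + q - p * q = q + p - q * p"
  using ring.idem_join_comm[OF mat_ring_ring, of p n q] assms by (simp add: mat_ring_to_mat)

lemma mat_compl:
  fixes p :: "complex mat"
  assumes "p \<in> carrier_mat n n" "p * p = p"
  shows "p * (1\<^sub>m n - p) = 0\<^sub>m n n" "p + (1\<^sub>m n - p) - p * (1\<^sub>m n - p) = 1\<^sub>m n"
  using ring.idem_compl[OF mat_ring_ring, of p n] assms by (simp_all add: mat_ring_to_mat)

lemma mat_units:
  fixes p :: "complex mat"
  assumes "p \<in> carrier_mat n n"
  shows "p * 1\<^sub>m n = p" "p + 0\<^sub>m n n - p * 0\<^sub>m n n = p"
  using ring.idem_units[OF mat_ring_ring, of p n] assms by (simp_all add: mat_ring_to_mat)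

lemma mat_le_join:
  fixes a p q :: "complex mat"
  assumes "a \<in> carrier_mat n n" "p \<in> carrier_mat n n" "q \<in> carrier_mat n n" "a * p = a"
  shows "a * (p + q - p * q) = a"
  using ring.idem_le_join[OF mat_ring_ring, of a n p q] assms by (simp add: mat_ring_to_mat)

lemma mat_join_le:
  fixes a b p :: "complex mat"
  assumes "a \<in> carrier_mat n n" "b \<in> carrier_mat n n" "p \<in> carrier_mat n n"
    "a * p = a" "b * p = b"
  shows "(a + b - a * b) * p = a + b - a * b"
  using ring.idem_join_le[OF mat_ring_ring, of a n b p] assms by (simp add: mat_ring_to_mat)

lemma mat_meet_le:
  fixes a p q :: "complex mat"
  assumes "a \<in> carrier_mat n n" "p \<in> carrier_mat n n" "q \<in> carrier_mat n n" "p * p = p"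
    "p * q = q * p" "a * (p * q) = a"
  shows "a * p = a"
  using ring.idem_meet_le[OF mat_ring_ring, of a n p q] assms by (simp add: mat_ring_to_mat)

lemma mat_commute_closed:
  fixes x p q :: "complex mat"
  assumes "x \<in> carrier_mat n n" "p \<in> carrier_mat n n" "q \<in> carrier_mat n n"
    "x * p = p * x" "x * q = q * x"
  shows "x * (p * q) = (p * q) * x"
    "x * (p + q - p * q) = (p + q - p * q) * x"
    "x * (1\<^sub>m n - p) = (1\<^sub>m n - p) * x"
  using ring.commute_closed[OF mat_ring_ring, of x n p q] assms by (simp_all add: mat_ring_to_mat)

lemma mat_minus_zero: "M \<in> carrier_mat n n \<Longrightarrow> M - 0\<^sub>m n n = (M :: complex mat)"
  by (rule eq_matI) auto

lemma mat_mult_entry: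
  fixes A B :: "complex mat"
  assumes "A \<in> carrier_mat n n" "B \<in> carrier_mat n n" "i < n" "j < n"
  shows "(A * B) $$ (i, j) = (\<Sum>k<n. A $$ (i, k) * B $$ (k, j))"
  using assms by (simp add: scalar_prod_def atLeast0LessThan)

definition hermitian :: "nat \<Rightarrow> complex mat \<Rightarrow> bool" where
  "hermitian n p \<longleftrightarrow> (\<forall>i<n. \<forall>j<n. p $$ (i, j) = cnj (p $$ (j, i)))"

abbreviation projections :: "nat \<Rightarrow> complex mat set" where
  "projections n \<equiv> pcarrier (Proj n)"

lemma projections_iff:
  "p \<in> projections n \<longleftrightarrow> p \<in> carrier_mat n n \<and> hermitian n p \<and> p * p = p"
  by (simp add: Proj_def hermitian_def)

lemma projection_carrier: "p \<in> projections n \<Longrightarrow> p \<in> carrier_mat n n"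
  and projection_idem: "p \<in> projections n \<Longrightarrow> p * p = p"
  by (simp_all add: projections_iff)

lemma hermitian_mult:
  fixes p q :: "complex mat"
  assumes c: "p \<in> carrier_mat n n" "q \<in> carrier_mat n n"
    and h: "hermitian n p" "hermitian n q" and m: "p * q = q * p"
  shows "hermitian n (p * q)"
  unfolding hermitian_def
proof (intro allI impI)
  fix i j assume ij: "i < n" "j < n"
  have "cnj ((p * q) $$ (j, i)) = cnj ((q * p) $$ (j, i))" using m by simp
  also have "\<dots> = cnj (\<Sum>k<n. q $$ (j, k) * p $$ (k, i))"
    by (subst mat_mult_entry[OF c(2,1) ij(2,1)]) simp
  also have "\<dots> = (\<Sum>k<n. cnj (q $$ (j, k)) * cnj (p $$ (k, i)))"
    by (simp add: cnj_sum)
  also have "\<dots> = (\<Sum>k<n. p $$ (i, k) * q $$ (k, j))"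
  proof (rule sum.cong[OF refl])
    fix k assume "k \<in> {..<n}"
    then have "q $$ (k, j) = cnj (q $$ (j, k))" "p $$ (i, k) = cnj (p $$ (k, i))"
      using h ij unfolding hermitian_def by blast+
    then show "cnj (q $$ (j, k)) * cnj (p $$ (k, i)) = p $$ (i, k) * q $$ (k, j)"
      by (simp add: mult.commute)
  qed
  also have "\<dots> = (p * q) $$ (i, j)" by (subst mat_mult_entry[OF c ij]) simp
  finally show "(p * q) $$ (i, j) = cnj ((p * q) $$ (j, i))" by simp
qed

lemma hermitian_add_minus:
  assumes c: "p \<in> carrier_mat n n" "q \<in> carrier_mat n n" and h: "hermitian n p" "hermitian n q"
  shows "hermitian n (p + q)" "hermitian n (p - q)"
proof -
  have "(p + q) $$ (i, j) = cnj ((p + q) $$ (j, i)) \<and> (p - q) $$ (i, j) = cnj ((p - q) $$ (j, i))"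
    if ij: "i < n" "j < n" for i j
  proof -
    have "p $$ (i, j) = cnj (p $$ (j, i))" "q $$ (i, j) = cnj (q $$ (j, i))"
      using h ij unfolding hermitian_def by blast+
    then show ?thesis using c ij by simp
  qed
  then show "hermitian n (p + q)" "hermitian n (p - q)" unfolding hermitian_def by blast+
qed

lemma hermitian_one: "hermitian n (1\<^sub>m n)"
  unfolding hermitian_def by simp

lemma hermitian_zero: "hermitian n (0\<^sub>m n n)"
  unfolding hermitian_def by simp

lemma projections_zero: "0\<^sub>m n n \<in> projections n"
  and projections_one: "1\<^sub>m n \<in> projections n"
  by (simp_all add: projections_iff hermitian_zero hermitian_one)

lemma projections_meet:
  assumes "p \<in> projections n" "q \<in> projections n" "p * q = q * p"
  shows "p * q \<in> projections n"
  using assms by (auto simp: projections_iff intro: hermitian_mult mat_meet_idem)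

lemma projections_join:
  assumes p: "p \<in> projections n" and q: "q \<in> projections n" and pq: "p * q = q * p"
  shows "p + q - p * q \<in> projections n"
proof -
  have c: "p \<in> carrier_mat n n" "q \<in> carrier_mat n n" and h: "hermitian n p" "hermitian n q"
    using p q by (simp_all add: projections_iff)
  have "p + q - p * q \<in> carrier_mat n n"
    using c by (intro minus_carrier_mat add_carrier_mat square_mult_carrier)
  moreover have "hermitian n (p + q - p * q)"
    using hermitian_add_minus c h hermitian_mult[OF c h pq] by (simp add: square_mult_carrier)
  moreover have "(p + q - p * q) * (p + q - p * q) = p + q - p * q"
    by (rule mat_join_idem[OF c projection_idem[OF p] projection_idem[OF q] pq])
  ultimately show ?thesis by (simp only: projections_iff)
qed

lemma projections_compl: "p \<in> projections n \<Longrightarrow> 1\<^sub>m n - p \<in> projections n"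
  by (auto simp: projections_iff intro!: hermitian_add_minus(2) hermitian_one mat_compl_idem)

section \<open>Boolean subalgebras of Proj(M_n)\<close>

text \<open>For a set X of pairwise commuting projections, the projections of the double
  commutant X'' form a boolean subalgebra containing X.  These are the boolean
  algebras B at which the functor F is compared with the Stone spectrum.\<close>

definition commutant :: "nat \<Rightarrow> complex mat set \<Rightarrow> complex mat set" where
  "commutant n X = {q \<in> carrier_mat n n. \<forall>s\<in>X. q * s = s * q}"

definition dcomm :: "nat \<Rightarrow> complex mat set \<Rightarrow> complex mat set" where
  "dcomm n X = {p \<in> projections n. \<forall>q\<in>commutant n X. p * q = q * p}"

definition commuting :: "nat \<Rightarrow> complex mat set \<Rightarrow> bool" where
  "commuting n X \<longleftrightarrow> X \<subseteq> projections n \<and> (\<forall>x\<in>X. \<forall>y\<in>X. x * y = y * x)"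

lemma dcomm_projections: "dcomm n X \<subseteq> projections n"
  by (auto simp: dcomm_def)

lemma dcomm_carrier: "p \<in> dcomm n X \<Longrightarrow> p \<in> carrier_mat n n"
  and dcomm_idem: "p \<in> dcomm n X \<Longrightarrow> p * p = p"
  using dcomm_projections projection_carrier projection_idem by blast+

lemma dcomm_contains: "commuting n X \<Longrightarrow> X \<subseteq> dcomm n X"
  by (auto simp: dcomm_def commutant_def commuting_def)

lemma dcomm_comm:
  assumes "commuting n X" "p \<in> dcomm n X" "q \<in> dcomm n X"
  shows "p * q = q * p"
proof -
  have "p \<in> commutant n X"
    using assms(1,2) by (auto simp: dcomm_def commutant_def commuting_def projections_iff)
  then show ?thesis using assms(3) by (auto simp: dcomm_def)
qed

lemma dcomm_zero: "0\<^sub>m n n \<in> dcomm n X"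
  and dcomm_one: "1\<^sub>m n \<in> dcomm n X"
  by (auto simp: dcomm_def commutant_def projections_zero projections_one)

text \<open>Closure of dcomm n X under the operations: the results are projections
  (as X is commuting) that still commute with the commutant of X.\<close>

lemma dcomm_meet:
  assumes X: "commuting n X" and p: "p \<in> dcomm n X" and q: "q \<in> dcomm n X"
  shows "p * q \<in> dcomm n X"
  unfolding dcomm_def
proof (intro CollectI conjI ballI)
  show "p * q \<in> projections n"
    using projections_meet[OF _ _ dcomm_comm[OF X p q]] p q dcomm_projections by blast
  fix x assume x: "x \<in> commutant n X"
  have "x * (p * q) = (p * q) * x"
    by (rule mat_commute_closed(1)[OF _ dcomm_carrier[OF p] dcomm_carrier[OF q]])
      (use x p q in \<open>auto simp: commutant_def dcomm_def\<close>)
  then show "p * q * x = x * (p * q)" by simp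
qed

lemma dcomm_join:
  assumes X: "commuting n X" and p: "p \<in> dcomm n X" and q: "q \<in> dcomm n X"
  shows "p + q - p * q \<in> dcomm n X"
  unfolding dcomm_def
proof (intro CollectI conjI ballI)
  show "p + q - p * q \<in> projections n"
    using projections_join[OF _ _ dcomm_comm[OF X p q]] p q dcomm_projections by blast
  fix x assume x: "x \<in> commutant n X"
  have "x * (p + q - p * q) = (p + q - p * q) * x"
    by (rule mat_commute_closed(2)[OF _ dcomm_carrier[OF p] dcomm_carrier[OF q]])
      (use x p q in \<open>auto simp: commutant_def dcomm_def\<close>)
  then show "(p + q - p * q) * x = x * (p + q - p * q)" by simp
qed

lemma dcomm_compl:
  assumes p: "p \<in> dcomm n X"
  shows "1\<^sub>m n - p \<in> dcomm n X"
  unfolding dcomm_def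
proof (intro CollectI conjI ballI)
  show "1\<^sub>m n - p \<in> projections n"
    using projections_compl p dcomm_projections by blast
  fix x assume x: "x \<in> commutant n X"
  have "x * (1\<^sub>m n - p) = (1\<^sub>m n - p) * x"
    by (rule mat_commute_closed(3)[OF _ dcomm_carrier[OF p] dcomm_carrier[OF p]])
      (use x p in \<open>auto simp: commutant_def dcomm_def\<close>)
  then show "(1\<^sub>m n - p) * x = x * (1\<^sub>m n - p)" by simp
qed

lemma dcomm_antimono: "p \<in> dcomm n X \<Longrightarrow> dcomm n {p} \<subseteq> dcomm n X"
  by (auto simp: dcomm_def commutant_def)

definition proj_sub :: "nat \<Rightarrow> complex mat set \<Rightarrow> complex mat pba" where
  "proj_sub n T = (Proj n)\<lparr>pcarrier := T\<rparr>"

lemma proj_sub_simps [simp]: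
  "pcarrier (proj_sub n T) = T"
  "pcomm (proj_sub n T) = (\<lambda>p q. p * q = q * p)"
  "pzero (proj_sub n T) = 0\<^sub>m n n"
  "pone (proj_sub n T) = 1\<^sub>m n"
  "pneg (proj_sub n T) = (\<lambda>p. 1\<^sub>m n - p)"
  "pmeet (proj_sub n T) = (\<lambda>p q. p * q)"
  "pjoin (proj_sub n T) = (\<lambda>p q. p + q - p * q)"
  by (simp_all add: proj_sub_def Proj_def)

lemma proj_sub_all: "proj_sub n (projections n) = Proj n"
  by (simp add: proj_sub_def)

text \<open>dcomm n X is a boolean algebra inside any carrier containing it; this gives the
  subalgebra condition both for Proj(M_n) and for the subalgebra itself.\<close>

lemma dcomm_is_BA:
  assumes X: "commuting n X" and T: "dcomm n X \<subseteq> T"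
  shows "is_BA_on (proj_sub n T) (dcomm n X)"
  unfolding is_BA_on_def proj_sub_simps
proof (intro conjI ballI)
  show "dcomm n X \<subseteq> T" by (rule T)
  show "0\<^sub>m n n \<in> dcomm n X" "1\<^sub>m n \<in> dcomm n X" by (rule dcomm_zero, rule dcomm_one)
  fix x assume x: "x \<in> dcomm n X"
  note xc = dcomm_carrier[OF x] and xi = dcomm_idem[OF x]
  show "1\<^sub>m n - x \<in> dcomm n X" by (rule dcomm_compl[OF x])
  show "x * 1\<^sub>m n = x" "x + 0\<^sub>m n n - x * 0\<^sub>m n n = x" using mat_units[OF xc] by blast+
  show "x * (1\<^sub>m n - x) = 0\<^sub>m n n" "x + (1\<^sub>m n - x) - x * (1\<^sub>m n - x) = 1\<^sub>m n"
    using mat_compl[OF xc xi] by blast+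
  fix y assume y: "y \<in> dcomm n X"
  note yc = dcomm_carrier[OF y] and xy = dcomm_comm[OF X x y]
  show "x * y = y * x" "x * y = y * x" by (rule xy)+
  show "x * y \<in> dcomm n X" by (rule dcomm_meet[OF X x y])
  show "x + y - x * y \<in> dcomm n X" by (rule dcomm_join[OF X x y])
  show "x + y - x * y = y + x - y * x" by (rule mat_join_comm[OF xc yc xy])
  fix z assume z: "z \<in> dcomm n X"
  note zc = dcomm_carrier[OF z]
  show "x * (y + z - y * z) = x * y + x * z - x * y * (x * z)"
    by (rule mat_meet_join_distrib[OF xc yc zc xi xy])
  show "x + y * z - x * (y * z) = (x + y - x * y) * (x + z - x * z)"
    by (rule mat_join_meet_distrib[OF xc yc zc xi xy dcomm_comm[OF X x z]])
qed

lemma proj_sub_pba: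
  assumes T: "T \<subseteq> projections n"
    and zero: "0\<^sub>m n n \<in> T" and one: "1\<^sub>m n \<in> T"
    and compl: "\<And>x. x \<in> T \<Longrightarrow> 1\<^sub>m n - x \<in> T"
    and ops: "\<And>x y. x \<in> T \<Longrightarrow> y \<in> T \<Longrightarrow> x * y = y * x \<Longrightarrow> x * y \<in> T \<and> x + y - x * y \<in> T"
    and hull: "\<And>S. S \<subseteq> T \<Longrightarrow> \<forall>x\<in>S. \<forall>y\<in>S. x * y = y * x \<Longrightarrow>
      \<exists>X. commuting n X \<and> S \<subseteq> dcomm n X \<and> dcomm n X \<subseteq> T"
  shows "is_pba (proj_sub n T)"
  unfolding is_pba_def proj_sub_simps
proof (intro conjI ballI allI impI)
  show "0\<^sub>m n n \<in> T" "1\<^sub>m n \<in> T" by (rule zero, rule one)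
  fix x assume x: "x \<in> T"
  then have xc: "x \<in> carrier_mat n n" using T projection_carrier by blast
  show "x * x = x * x" by (rule refl)
  show "0\<^sub>m n n * x = x * 0\<^sub>m n n" "1\<^sub>m n * x = x * 1\<^sub>m n" using xc by auto
  show "1\<^sub>m n - x \<in> T" by (rule compl[OF x])
  fix y assume y: "y \<in> T" and xy: "x * y = y * x"
  show "y * x = x * y" by (rule xy[symmetric])
  show "x * y \<in> T" "x + y - x * y \<in> T" using ops[OF x y xy] by blast+
next
  fix S assume "S \<subseteq> T" "\<forall>x\<in>S. \<forall>y\<in>S. x * y = y * x"
  then obtain X where "commuting n X" "S \<subseteq> dcomm n X" "dcomm n X \<subseteq> T" using hull by blast
  then show "\<exists>T'. S \<subseteq> T' \<and> is_BA_on (proj_sub n T) T'" using dcomm_is_BA by blast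
qed

lemma Proj_pba: "is_pba (Proj n)"
proof -
  have "is_pba (proj_sub n (projections n))"
  proof (rule proj_sub_pba)
    fix S assume "S \<subseteq> projections n" "\<forall>x\<in>S. \<forall>y\<in>S. x * y = y * x"
    then have "commuting n S" by (simp add: commuting_def)
    then show "\<exists>X. commuting n X \<and> S \<subseteq> dcomm n X \<and> dcomm n X \<subseteq> projections n"
      using dcomm_contains dcomm_projections by blast
  next
    fix x y assume "x \<in> projections n" "y \<in> projections n" "x * y = y * x"
    then show "x * y \<in> projections n \<and> x + y - x * y \<in> projections n"
      using projections_meet projections_join by blast
  qed (auto intro: projections_zero projections_one projections_compl)
  then show ?thesis by (simp only: proj_sub_all)
qed

lemma dcomm_pba:
  assumes X: "commuting n X"
  shows "is_pba (proj_sub n (dcomm n X))"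
proof (rule proj_sub_pba)
  fix S assume "S \<subseteq> dcomm n X"
  then show "\<exists>X'. commuting n X' \<and> S \<subseteq> dcomm n X' \<and> dcomm n X' \<subseteq> dcomm n X"
    using X by blast
next
  fix x y assume "x \<in> dcomm n X" "y \<in> dcomm n X"
  then show "x * y \<in> dcomm n X \<and> x + y - x * y \<in> dcomm n X"
    using dcomm_meet[OF X] dcomm_join[OF X] by blast
qed (use dcomm_projections in \<open>auto intro: dcomm_zero dcomm_one dcomm_compl\<close>)

lemma dcomm_boolean: "commuting n X \<Longrightarrow> is_boolean (proj_sub n (dcomm n X))"
  unfolding is_boolean_def proj_sub_simps using dcomm_pba dcomm_comm by blast

lemma dcomm_inclusion_hom:
  assumes X: "commuting n X" and T: "dcomm n X \<subseteq> T"
  shows "pba_hom (proj_sub n (dcomm n X)) (proj_sub n T) (restrict id (dcomm n X))"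
  unfolding pba_hom_def proj_sub_simps
proof (intro conjI ballI impI)
  let ?i = "restrict id (dcomm n X)"
  show "?i \<in> dcomm n X \<rightarrow>\<^sub>E T" using T by auto
  show "?i (0\<^sub>m n n) = 0\<^sub>m n n" "?i (1\<^sub>m n) = 1\<^sub>m n" using dcomm_zero dcomm_one by simp_all
  fix x assume x: "x \<in> dcomm n X"
  show "?i (1\<^sub>m n - x) = 1\<^sub>m n - ?i x" using x dcomm_compl[OF x] by simp
  fix y assume y: "y \<in> dcomm n X"
  show "?i x * ?i y = ?i y * ?i x" if "x * y = y * x" using x y that by simp
  show "?i (x * y) = ?i x * ?i y" using x y dcomm_meet[OF X x y] by simp
  show "?i (x + y - x * y) = ?i x + ?i y - ?i x * ?i y"
    using x y dcomm_join[OF X x y] by (simp only: restrict_apply' id_apply)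
qed

lemma dcomm_inclusion_Proj:
  "commuting n X \<Longrightarrow> pba_hom (proj_sub n (dcomm n X)) (Proj n) (restrict id (dcomm n X))"
  using dcomm_inclusion_hom[OF _ dcomm_projections] by (simp add: proj_sub_all)

lemma commuting_empty: "commuting n {}"
  and commuting_single: "p \<in> projections n \<Longrightarrow> commuting n {p}"
  and commuting_pair: "p \<in> projections n \<Longrightarrow> q \<in> projections n \<Longrightarrow> p * q = q * p \<Longrightarrow> commuting n {p, q}"
  by (auto simp: commuting_def)

section \<open>Frames\<close>

locale frame_lattice =
  fixes L :: "'f frame"
  assumes frame: "is_frame L"
begin

abbreviation C where "C \<equiv> fcarrier L"
abbreviation le (infix "\<preceq>" 50) where "le \<equiv> fle L"

lemma refl_ax: "\<forall>x\<in>C. x \<preceq> x"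
  using frame unfolding is_frame_def by (elim conjE)
lemma antisym_ax: "\<forall>x\<in>C. \<forall>y\<in>C. x \<preceq> y \<longrightarrow> y \<preceq> x \<longrightarrow> x = y"
  using frame unfolding is_frame_def by (elim conjE)
lemma trans_ax: "\<forall>x\<in>C. \<forall>y\<in>C. \<forall>z\<in>C. x \<preceq> y \<longrightarrow> y \<preceq> z \<longrightarrow> x \<preceq> z"
  using frame unfolding is_frame_def by (elim conjE)
lemma lub_ax: "\<forall>X. X \<subseteq> C \<longrightarrow> (\<exists>s. is_lub L X s)"
  using frame unfolding is_frame_def by (elim conjE)
lemma glb_ax: "\<forall>a\<in>C. \<forall>b\<in>C. \<exists>s. is_glb L {a, b} s"
  using frame unfolding is_frame_def by (elim conjE)
lemma distrib_ax: "\<forall>a\<in>C. \<forall>X. X \<subseteq> C \<longrightarrow> fmeet L a (fSup L X) = fSup L ((\<lambda>x. fmeet L a x) ` X)"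
  using frame unfolding is_frame_def by (elim conjE)

lemma refl: "x \<in> C \<Longrightarrow> x \<preceq> x"
  using refl_ax by blast

lemma antisym: "x \<in> C \<Longrightarrow> y \<in> C \<Longrightarrow> x \<preceq> y \<Longrightarrow> y \<preceq> x \<Longrightarrow> x = y"
  using antisym_ax by blast

lemma trans: "x \<in> C \<Longrightarrow> y \<in> C \<Longrightarrow> z \<in> C \<Longrightarrow> x \<preceq> y \<Longrightarrow> y \<preceq> z \<Longrightarrow> x \<preceq> z"
  using trans_ax by blast

lemma distributive: "a \<in> C \<Longrightarrow> X \<subseteq> C \<Longrightarrow> fmeet L a (fSup L X) = fSup L ((\<lambda>x. fmeet L a x) ` X)"
  using distrib_ax by blast

lemma lub_unique: "is_lub L X s \<Longrightarrow> is_lub L X t \<Longrightarrow> s = t"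
  unfolding is_lub_def using antisym by blast

lemma glb_unique: "is_glb L X s \<Longrightarrow> is_glb L X t \<Longrightarrow> s = t"
  unfolding is_glb_def using antisym by blast

lemma fSup_lub:
  assumes "X \<subseteq> C"
  shows "is_lub L X (fSup L X)"
proof -
  obtain s where s: "is_lub L X s" using lub_ax assms by blast
  show ?thesis unfolding fSup_def by (rule theI[of _ s]) (use s lub_unique in blast)+
qed

lemma fmeet_glb:
  assumes "a \<in> C" "b \<in> C"
  shows "is_glb L {a, b} (fmeet L a b)"
proof -
  obtain s where s: "is_glb L {a, b} s" using glb_ax assms by blast
  show ?thesis unfolding fmeet_def by (rule theI[of _ s]) (use s glb_unique in blast)+
qed

lemma meet_C: "a \<in> C \<Longrightarrow> b \<in> C \<Longrightarrow> fmeet L a b \<in> C"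
  and meet_le1: "a \<in> C \<Longrightarrow> b \<in> C \<Longrightarrow> fmeet L a b \<preceq> a"
  and meet_le2: "a \<in> C \<Longrightarrow> b \<in> C \<Longrightarrow> fmeet L a b \<preceq> b"
  using fmeet_glb unfolding is_glb_def by blast+

lemma meet_greatest:
  "a \<in> C \<Longrightarrow> b \<in> C \<Longrightarrow> u \<in> C \<Longrightarrow> u \<preceq> a \<Longrightarrow> u \<preceq> b \<Longrightarrow> u \<preceq> fmeet L a b"
  using fmeet_glb[of a b] unfolding is_glb_def by blast

lemma sup_C: "X \<subseteq> C \<Longrightarrow> fSup L X \<in> C"
  and sup_upper: "X \<subseteq> C \<Longrightarrow> x \<in> X \<Longrightarrow> x \<preceq> fSup L X"
  using fSup_lub unfolding is_lub_def by blast+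

lemma sup_least: "X \<subseteq> C \<Longrightarrow> u \<in> C \<Longrightarrow> (\<And>x. x \<in> X \<Longrightarrow> x \<preceq> u) \<Longrightarrow> fSup L X \<preceq> u"
  using fSup_lub[of X] unfolding is_lub_def by blast

lemma bot_C: "fbot L \<in> C" and top_C: "ftop L \<in> C"
  unfolding fbot_def ftop_def by (simp_all add: sup_C)

lemma bot_le: "x \<in> C \<Longrightarrow> fbot L \<preceq> x"
  unfolding fbot_def by (rule sup_least) auto

lemma le_top: "x \<in> C \<Longrightarrow> x \<preceq> ftop L"
  unfolding ftop_def by (rule sup_upper) auto

lemma join_C: "a \<in> C \<Longrightarrow> b \<in> C \<Longrightarrow> fSup L {a, b} \<in> C"
  by (rule sup_C) auto

lemma join_upper: "a \<in> C \<Longrightarrow> b \<in> C \<Longrightarrow> a \<preceq> fSup L {a, b}"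
  by (rule sup_upper) auto

lemma join_least:
  "a \<in> C \<Longrightarrow> b \<in> C \<Longrightarrow> u \<in> C \<Longrightarrow> a \<preceq> u \<Longrightarrow> b \<preceq> u \<Longrightarrow> fSup L {a, b} \<preceq> u"
  by (rule sup_least) auto

lemma meet_join_distrib:
  "a \<in> C \<Longrightarrow> b \<in> C \<Longrightarrow> c \<in> C \<Longrightarrow> fmeet L a (fSup L {b, c}) = fSup L {fmeet L a b, fmeet L a c}"
  using distributive[of a "{b, c}"] by simp

lemma meet_absorb: "a \<in> C \<Longrightarrow> b \<in> C \<Longrightarrow> a \<preceq> b \<Longrightarrow> fmeet L a b = a"
  by (rule antisym) (use meet_C meet_le1 meet_greatest refl in auto)

lemma join_top_bot: "fSup L {ftop L, fbot L} = ftop L"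
  by (rule antisym[OF join_C[OF top_C bot_C] top_C le_top[OF join_C[OF top_C bot_C]]
      join_upper[OF top_C bot_C]])

lemma below_disjoint:
  assumes "m \<in> C" "a \<in> C" "b \<in> C" "m \<preceq> a" "m \<preceq> b" "fmeet L a b \<preceq> fbot L"
  shows "m \<preceq> fbot L"
  by (rule trans[OF _ meet_C _ meet_greatest]) (use assms bot_C in auto)

lemma split_bot:
  assumes a: "a \<in> C" and xy: "x \<in> C" "y \<in> C" "fSup L {x, y} = ftop L"
    and h: "fmeet L a x \<preceq> fbot L" "fmeet L a y \<preceq> fbot L"
  shows "a \<preceq> fbot L"
proof -
  have "a = fmeet L a (ftop L)" using meet_absorb[OF a top_C le_top[OF a]] by simp
  also have "\<dots> = fSup L {fmeet L a x, fmeet L a y}" using meet_join_distrib[OF a xy(1,2)] xy(3) by simp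
  finally have e: "a = fSup L {fmeet L a x, fmeet L a y}" .
  show ?thesis by (subst e, rule join_least) (use a xy h meet_C bot_C in auto)
qed

lemma below_join3_bot:
  assumes c: "m \<in> C" "xa \<in> C" "xb \<in> C" "xc \<in> C" "ya \<in> C" "yb \<in> C" "yc \<in> C"
    and e: "m \<preceq> fSup L {fSup L {xa, xb}, xc}"
    and y: "m \<preceq> ya" "m \<preceq> yb" "m \<preceq> yc"
    and o: "fmeet L xa ya \<preceq> fbot L" "fmeet L xb yb \<preceq> fbot L" "fmeet L xc yc \<preceq> fbot L"
  shows "m \<preceq> fbot L"
proof -
  have disj: "fmeet L m x \<preceq> fbot L"
    if "x \<in> C" "z \<in> C" "m \<preceq> z" "fmeet L x z \<preceq> fbot L" for x z
    by (rule below_disjoint[OF meet_C[OF c(1) that(1)] that(1,2) meet_le2[OF c(1) that(1)]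
          trans[OF meet_C[OF c(1) that(1)] c(1) that(2) meet_le1[OF c(1) that(1)] that(3)] that(4)])
  have j: "fSup L {xa, xb} \<in> C" using c join_C by auto
  have "m = fmeet L m (fSup L {fSup L {xa, xb}, xc})" using meet_absorb[OF c(1) join_C[OF j c(4)] e] by simp
  also have "\<dots> = fSup L {fSup L {fmeet L m xa, fmeet L m xb}, fmeet L m xc}"
    using meet_join_distrib[OF c(1) j c(4)] meet_join_distrib[OF c(1) c(2) c(3)] by simp
  finally have eq: "m = fSup L {fSup L {fmeet L m xa, fmeet L m xb}, fmeet L m xc}" .
  show ?thesis
    by (subst eq) (intro join_least join_C meet_C bot_C disj; use c y o in simp)
qed

text \<open>Given pairs x i, y i with x i \<squnion> y i = \<top>, a valuation
  v : nat \<Rightarrow> bool selects the literal x i (if v i) or y i; the cell of a for v is the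
  meet of a with the first k selected literals.  Distributivity lets a be recovered
  from its cells, so a is bottom as soon as all its cells are.\<close>

definition literal :: "(nat \<Rightarrow> 'f) \<Rightarrow> (nat \<Rightarrow> 'f) \<Rightarrow> (nat \<Rightarrow> bool) \<Rightarrow> nat \<Rightarrow> 'f" where
  "literal x y v i = (if v i then x i else y i)"

fun cell :: "(nat \<Rightarrow> 'f) \<Rightarrow> (nat \<Rightarrow> 'f) \<Rightarrow> 'f \<Rightarrow> (nat \<Rightarrow> bool) \<Rightarrow> nat \<Rightarrow> 'f" where
  "cell x y a v 0 = a"
| "cell x y a v (Suc k) = cell x y (fmeet L a (literal x y v k)) v k"

context
  fixes x y :: "nat \<Rightarrow> 'f"
  assumes xy_C: "\<And>i. x i \<in> C" "\<And>i. y i \<in> C"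
begin

lemma literal_C: "literal x y v i \<in> C"
  using xy_C by (auto simp: literal_def)

lemma cell_C: "a \<in> C \<Longrightarrow> cell x y a v k \<in> C"
  by (induction k arbitrary: a) (auto simp: meet_C literal_C)

lemma cell_cong: "(\<And>i. i < k \<Longrightarrow> v i = w i) \<Longrightarrow> cell x y a v k = cell x y a w k"
  by (induction k arbitrary: a) (auto simp: literal_def)

lemma cell_le: "a \<in> C \<Longrightarrow> cell x y a v k \<preceq> a"
proof (induction k arbitrary: a)
  case 0
  then show ?case by (simp add: refl)
next
  case (Suc k)
  have m: "fmeet L a (literal x y v k) \<in> C" using Suc.prems literal_C meet_C by blast
  show ?case
    using trans[OF cell_C[OF m] m Suc.prems Suc.IH[OF m] meet_le1[OF Suc.prems literal_C]] by simp
qed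

lemma cell_le_literal: "a \<in> C \<Longrightarrow> i < k \<Longrightarrow> cell x y a v k \<preceq> literal x y v i"
proof (induction k arbitrary: a)
  case 0
  then show ?case by simp
next
  case (Suc k)
  have m: "fmeet L a (literal x y v k) \<in> C" using Suc.prems literal_C meet_C by blast
  show ?case
  proof (cases "i = k")
    case True
    have "cell x y a v (Suc k) \<preceq> fmeet L a (literal x y v k)" using cell_le[OF m] by simp
    then show ?thesis
      using True trans[OF cell_C[OF m] m literal_C _ meet_le2[OF Suc.prems(1) literal_C]] by simp
  next
    case False
    then show ?thesis using Suc.IH[OF m] Suc.prems(2) by simp
  qed
qed

lemma bot_if_cells_bot:
  assumes top: "\<And>i. fSup L {x i, y i} = ftop L"
  shows "a \<in> C \<Longrightarrow> (\<And>v. cell x y a v k \<preceq> fbot L) \<Longrightarrow> a \<preceq> fbot L"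
proof (induction k arbitrary: a)
  case 0
  then show ?case by simp
next
  case (Suc k)
  have branch: "fmeet L a (literal x y w k) \<preceq> fbot L" for w
  proof (rule Suc.IH)
    show "fmeet L a (literal x y w k) \<in> C" using Suc.prems(1) literal_C meet_C by blast
    fix v
    let ?v' = "v(k := w k)"
    have "literal x y ?v' k = literal x y w k" by (simp add: literal_def)
    moreover have "cell x y b v k = cell x y b ?v' k" for b by (rule cell_cong) simp
    ultimately have "cell x y (fmeet L a (literal x y w k)) v k
        = cell x y (fmeet L a (literal x y ?v' k)) ?v' k" by simp
    then show "cell x y (fmeet L a (literal x y w k)) v k \<preceq> fbot L"
      using Suc.prems(2)[of ?v'] by (simp only: cell.simps)
  qed
  have "fmeet L a (x k) \<preceq> fbot L" "fmeet L a (y k) \<preceq> fbot L"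
    using branch[of "\<lambda>_. True"] branch[of "\<lambda>_. False"] by (simp_all add: literal_def)
  then show ?case by (rule split_bot[OF Suc.prems(1) xy_C top])
qed

end

end

section \<open>The Kochen--Specker configuration\<close>

text \<open>Integer vectors in three coordinates: coordinates, squared norm, inner product,
  and the condition that three vectors a, b, c resolve the identity, i.e. that
  a a^T/|a|^2 + b b^T/|b|^2 + c c^T/|c|^2 = I, stated after clearing denominators.\<close>

type_synonym ivec = "int \<times> int \<times> int"

definition coord :: "ivec \<Rightarrow> nat \<Rightarrow> int" where
  "coord v k = (if k = 0 then fst v else if k = 1 then fst (snd v) else snd (snd v))"

definition sqnorm :: "ivec \<Rightarrow> int" where
  "sqnorm v = fst v * fst v + fst (snd v) * fst (snd v) + snd (snd v) * snd (snd v)"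

definition dot :: "ivec \<Rightarrow> ivec \<Rightarrow> int" where
  "dot v w = fst v * fst w + fst (snd v) * fst (snd w) + snd (snd v) * snd (snd w)"

definition resolves_identity :: "ivec \<Rightarrow> ivec \<Rightarrow> ivec \<Rightarrow> bool" where
  "resolves_identity a b c \<longleftrightarrow> (\<forall>k\<in>{0,1,2}. \<forall>l\<in>{0,1,2}.
     coord a k * coord a l * sqnorm b * sqnorm c + coord b k * coord b l * sqnorm a * sqnorm c
       + coord c k * coord c l * sqnorm a * sqnorm b
     = (if k = l then sqnorm a * sqnorm b * sqnorm c else 0))"

lemma dot_sym: "dot v w = dot w v"
  by (simp add: dot_def mult.commute)

text \<open>A Kochen--Specker configuration: 31 nonzero vectors, 39 orthogonal pairs and
  17 orthogonal bases (triples resolving the identity) among them, such that no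
  assignment of truth values marks at least one vector of each basis but never two
  orthogonal vectors.\<close>

definition ks_vectors :: "ivec list" where
  "ks_vectors = [(0, 0, 1), (0, 1, (-2)), (0, 1, (-1)), (0, 1, 0), (0, 1, 1), (0, 1, 2), (0, 2, (-1)), (0, 2, 1), (1, (-2), (-1)), (1, (-2), 0), (1, (-2), 1), (1, (-1), (-2)), (1, (-1), (-1)), (1, (-1), 0), (1, (-1), 1), (1, 0, (-2)), (1, 0, (-1)), (1, 0, 0), (1, 0, 1), (1, 1, (-2)), (1, 1, (-1)), (1, 1, 0), (1, 1, 1), (1, 2, (-1)), (1, 2, 0), (1, 2, 1), (2, (-1), 0), (2, (-1), 1), (2, 0, 1), (2, 1, 0), (2, 1, 1)]"

definition ks_pairs :: "(nat \<times> nat) list" where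
  "ks_pairs = [(13,22), (6,11), (5,10), (14,16), (0,17), (12,18), (7,19), (2,17), (23,26), (8,29), (10,29), (15,30), (9,30), (4,14), (2,22), (5,23), (12,21), (0,13), (13,20), (16,22), (0,21), (14,21), (4,17), (3,17), (4,20), (11,28), (1,25), (2,4), (24,27), (3,16), (16,18), (25,26), (2,12), (18,20), (0,3), (19,28), (15,27), (1,8), (3,18)]"

definition ks_bases :: "(nat \<times> nat \<times> nat) list" where
  "ks_bases = [(0,13,21), (1,7,17), (4,20,27), (3,16,18), (5,6,17), (11,14,21), (2,12,30), (0,24,26), (8,18,20), (13,19,22), (2,4,17), (0,9,29), (0,3,17), (10,16,22), (12,18,23), (14,16,25), (3,15,28)]"

lemma ks_vectors_length: "length ks_vectors = 31"
  by (simp add: ks_vectors_def)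

lemma ks_vectors_nonzero: "\<forall>v\<in>set ks_vectors. sqnorm v \<noteq> 0"
  by code_simp

lemma ks_pairs_orthogonal:
  "\<forall>(i, j)\<in>set ks_pairs. i < 31 \<and> j < 31 \<and> dot (ks_vectors ! i) (ks_vectors ! j) = 0"
  by code_simp

lemma ks_bases_orthogonal:
  "\<forall>(i, j, k)\<in>set ks_bases. i < 31 \<and> j < 31 \<and> k < 31
     \<and> dot (ks_vectors ! i) (ks_vectors ! j) = 0 \<and> dot (ks_vectors ! i) (ks_vectors ! k) = 0
     \<and> dot (ks_vectors ! j) (ks_vectors ! k) = 0
     \<and> resolves_identity (ks_vectors ! i) (ks_vectors ! j) (ks_vectors ! k)"
  by code_simp

lemma ks_no_colouring:
  fixes v :: "nat \<Rightarrow> bool"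
  shows "(\<exists>(i, j)\<in>set ks_pairs. v i \<and> v j) \<or> (\<exists>(i, j, k)\<in>set ks_bases. \<not> v i \<and> \<not> v j \<and> \<not> v k)"
  unfolding ks_pairs_def ks_bases_def
  by (simp only: list.set insert_iff empty_iff bex_simps split_conv disj_imp simp_thms) sat

text \<open>Each cell of e (see
  cell) contains two literals x i, x j of an orthogonal pair or lies below a basis
  join while disjoint from all three of its members.\<close>

context frame_lattice begin

lemma ks_frame_bot:
  assumes x_C: "\<And>i. x i \<in> C" and y_C: "\<And>i. y i \<in> C" and e_C: "e \<in> C"
    and top: "\<And>i. fSup L {x i, y i} = ftop L"
    and compl: "\<And>i. i < 31 \<Longrightarrow> fmeet L (x i) (y i) = fbot L"
    and pair: "\<And>i j. (i, j) \<in> set ks_pairs \<Longrightarrow> fmeet L (x i) (x j) = fbot L"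
    and basis: "\<And>i j k. (i, j, k) \<in> set ks_bases \<Longrightarrow> e = fSup L {fSup L {x i, x j}, x k}"
  shows "e \<preceq> fbot L"
proof (rule bot_if_cells_bot[OF x_C y_C top e_C])
  fix v
  let ?m = "cell x y e v 31"
  have m_C: "?m \<in> C" by (rule cell_C[OF x_C y_C e_C])
  have lit: "?m \<preceq> literal x y v i" if "i < 31" for i
    by (rule cell_le_literal[OF x_C y_C e_C that])
  from ks_no_colouring[of v] show "?m \<preceq> fbot L"
  proof (elim disjE bexE)
    fix ij assume ij: "ij \<in> set ks_pairs" and true: "case ij of (i, j) \<Rightarrow> v i \<and> v j"
    obtain i j where ij_eq: "ij = (i, j)" by (cases ij)
    have "i < 31" "j < 31" using ks_pairs_orthogonal ij ij_eq by auto
    then have "?m \<preceq> x i" "?m \<preceq> x j"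
      using lit[of i] lit[of j] true ij_eq by (auto simp: literal_def)
    then show ?thesis
      using below_disjoint[OF m_C x_C x_C] pair[of i j] ij ij_eq refl[OF bot_C] by simp
  next
    fix ijk assume ijk: "ijk \<in> set ks_bases" and false: "case ijk of (i, j, k) \<Rightarrow> \<not> v i \<and> \<not> v j \<and> \<not> v k"
    obtain i j k where ijk_eq: "ijk = (i, j, k)" by (cases ijk) auto
    have idx: "i < 31" "j < 31" "k < 31" using ks_bases_orthogonal ijk ijk_eq by auto
    then have "?m \<preceq> y i" "?m \<preceq> y j" "?m \<preceq> y k"
      using lit[of i] lit[of j] lit[of k] false ijk_eq by (auto simp: literal_def)
    moreover have "?m \<preceq> fSup L {fSup L {x i, x j}, x k}"
      using cell_le[OF x_C y_C e_C, where v = v and k = 31] basis[of i j k] ijk ijk_eq by simp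
    moreover have "fmeet L (x l) (y l) \<preceq> fbot L" if "l < 31" for l
      using compl[OF that] refl[OF bot_C] by simp
    ultimately show ?thesis
      using below_join3_bot[OF m_C x_C x_C x_C y_C y_C y_C] idx by presburger
  qed
qed

end

section \<open>Diagonal and rank-one projections\<close>

definition diag_proj :: "nat \<Rightarrow> nat set \<Rightarrow> complex mat" where
  "diag_proj n S = mat n n (\<lambda>(i, j). if i = j \<and> i \<in> S then 1 else 0)"

lemma diag_proj_carrier: "diag_proj n S \<in> carrier_mat n n"
  by (simp add: diag_proj_def)

lemma diag_proj_mult: "diag_proj n S * diag_proj n S' = diag_proj n (S \<inter> S')"
proof (rule eq_matI)
  fix i j assume "i < dim_row (diag_proj n (S \<inter> S'))" "j < dim_col (diag_proj n (S \<inter> S'))"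
  then have ij: "i < n" "j < n" by (auto simp: diag_proj_def)
  have "(diag_proj n S * diag_proj n S') $$ (i, j)
      = (\<Sum>k<n. diag_proj n S $$ (i, k) * diag_proj n S' $$ (k, j))"
    by (rule mat_mult_entry[OF diag_proj_carrier diag_proj_carrier ij])
  also have "\<dots> = (\<Sum>k<n. if k = i then (if i = j \<and> i \<in> S \<and> i \<in> S' then 1 else 0) else 0)"
    by (rule sum.cong) (use ij in \<open>auto simp: diag_proj_def\<close>)
  also have "\<dots> = diag_proj n (S \<inter> S') $$ (i, j)" using ij by (simp add: diag_proj_def)
  finally show "(diag_proj n S * diag_proj n S') $$ (i, j) = diag_proj n (S \<inter> S') $$ (i, j)" .
qed (auto simp: diag_proj_def)

lemma diag_proj_join: "diag_proj n S + diag_proj n S' - diag_proj n S * diag_proj n S' = diag_proj n (S \<union> S')"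
  unfolding diag_proj_mult by (rule eq_matI) (auto simp: diag_proj_def)

lemma diag_proj_comm: "diag_proj n S * diag_proj n S' = diag_proj n S' * diag_proj n S"
  by (simp add: diag_proj_mult Int_commute)

lemma diag_proj_projection: "diag_proj n S \<in> projections n"
proof -
  have "hermitian n (diag_proj n S)"
    unfolding hermitian_def by (auto simp: diag_proj_def)
  then show ?thesis using diag_proj_carrier diag_proj_mult[of n S S] by (simp add: projections_iff)
qed

lemma diag_proj_empty: "diag_proj n {} = 0\<^sub>m n n"
  and diag_proj_all: "diag_proj n {0..<n} = 1\<^sub>m n"
  by (rule eq_matI; auto simp: diag_proj_def)+

text \<open>Rank-one projections onto the line spanned by an integer vector placed in three
  distinct coordinates i0, i1, i2 of C^n: orthogonal vectors give orthogonal
  projections, and an orthogonal basis gives the diagonal projection onto the three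
  coordinates.\<close>

context
  fixes n i0 i1 i2 :: nat
  assumes distinct: "i0 < n" "i1 < n" "i2 < n" "i0 \<noteq> i1" "i0 \<noteq> i2" "i1 \<noteq> i2"
begin

definition lift_vec :: "ivec \<Rightarrow> nat \<Rightarrow> int" where
  "lift_vec v r = (if r = i0 then fst v else if r = i1 then fst (snd v) else if r = i2 then snd (snd v) else 0)"

definition line_proj :: "ivec \<Rightarrow> complex mat" where
  "line_proj v = mat n n (\<lambda>(r, s). of_int (lift_vec v r * lift_vec v s) / of_int (sqnorm v))"

lemma lift_vec_simps: "lift_vec v i0 = fst v" "lift_vec v i1 = fst (snd v)" "lift_vec v i2 = snd (snd v)"
  "r \<notin> {i0, i1, i2} \<Longrightarrow> lift_vec v r = 0"
  using distinct by (auto simp: lift_vec_def)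

lemma sum_three_coords:
  assumes "\<And>t. t \<notin> {i0, i1, i2} \<Longrightarrow> g t = 0"
  shows "(\<Sum>t<n. g t) = g i0 + g i1 + g i2"
proof -
  have "(\<Sum>t<n. g t) = (\<Sum>t\<in>{i0, i1, i2}. g t)"
    by (rule sum.mono_neutral_right) (use distinct assms in auto)
  also have "\<dots> = g i0 + g i1 + g i2" using distinct by (simp add: add.assoc)
  finally show ?thesis .
qed

lemma line_proj_carrier: "line_proj v \<in> carrier_mat n n"
  by (simp add: line_proj_def)

lemma line_proj_mult_entry:
  assumes rs: "r < n" "s < n"
  shows "(line_proj v * line_proj w) $$ (r, s)
    = of_int (lift_vec v r * lift_vec w s * dot v w) / (of_int (sqnorm v) * of_int (sqnorm w))"
proof -
  have "(line_proj v * line_proj w) $$ (r, s) = (\<Sum>t<n. line_proj v $$ (r, t) * line_proj w $$ (t, s))"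
    by (rule mat_mult_entry[OF line_proj_carrier line_proj_carrier rs])
  also have "\<dots> = (\<Sum>t<n. (of_int (lift_vec v r * lift_vec v t) / of_int (sqnorm v))
      * (of_int (lift_vec w t * lift_vec w s) / of_int (sqnorm w)))"
    by (rule sum.cong) (use rs in \<open>auto simp: line_proj_def\<close>)
  also have "\<dots> = (of_int (lift_vec v r * lift_vec v i0) / of_int (sqnorm v)) * (of_int (lift_vec w i0 * lift_vec w s) / of_int (sqnorm w))
     + (of_int (lift_vec v r * lift_vec v i1) / of_int (sqnorm v)) * (of_int (lift_vec w i1 * lift_vec w s) / of_int (sqnorm w))
     + (of_int (lift_vec v r * lift_vec v i2) / of_int (sqnorm v)) * (of_int (lift_vec w i2 * lift_vec w s) / of_int (sqnorm w))"
    by (rule sum_three_coords) (simp add: lift_vec_simps)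
  also have "\<dots> = of_int (lift_vec v r * lift_vec w s * dot v w) / (of_int (sqnorm v) * of_int (sqnorm w))"
    unfolding lift_vec_simps dot_def by (simp add: algebra_simps add_divide_distrib)
  finally show ?thesis .
qed

lemma line_proj_projection:
  assumes nz: "sqnorm v \<noteq> 0"
  shows "line_proj v \<in> projections n"
proof -
  have "hermitian n (line_proj v)"
    unfolding hermitian_def by (simp add: line_proj_def mult.commute)
  moreover have "line_proj v * line_proj v = line_proj v"
  proof (rule eq_matI)
    fix r s assume "r < dim_row (line_proj v)" "s < dim_col (line_proj v)"
    then have rs: "r < n" "s < n" by (auto simp: line_proj_def)
    have "dot v v = sqnorm v" by (simp add: dot_def sqnorm_def)
    then show "(line_proj v * line_proj v) $$ (r, s) = line_proj v $$ (r, s)"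
      unfolding line_proj_mult_entry[OF rs] using rs nz by (simp add: line_proj_def field_simps)
  qed (auto simp: line_proj_def)
  ultimately show ?thesis using line_proj_carrier by (simp add: projections_iff)
qed

lemma line_proj_orthogonal:
  assumes "dot v w = 0"
  shows "line_proj v * line_proj w = 0\<^sub>m n n"
proof (rule eq_matI)
  fix r s assume "r < dim_row (0\<^sub>m n n :: complex mat)" "s < dim_col (0\<^sub>m n n :: complex mat)"
  then have rs: "r < n" "s < n" by auto
  show "(line_proj v * line_proj w) $$ (r, s) = 0\<^sub>m n n $$ (r, s)"
    unfolding line_proj_mult_entry[OF rs] using rs assms by simp
qed (auto simp: line_proj_def)

lemma line_proj_basis:
  assumes nz: "sqnorm a \<noteq> 0" "sqnorm b \<noteq> 0" "sqnorm c \<noteq> 0" and res: "resolves_identity a b c"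
  shows "line_proj a + line_proj b + line_proj c = diag_proj n {i0, i1, i2}"
proof (rule eq_matI)
  fix r s assume "r < dim_row (diag_proj n {i0, i1, i2})" "s < dim_col (diag_proj n {i0, i1, i2})"
  then have rs: "r < n" "s < n" by (auto simp: diag_proj_def)
  have lhs: "(line_proj a + line_proj b + line_proj c) $$ (r, s)
      = of_int (lift_vec a r * lift_vec a s) / of_int (sqnorm a)
      + of_int (lift_vec b r * lift_vec b s) / of_int (sqnorm b)
      + of_int (lift_vec c r * lift_vec c s) / of_int (sqnorm c)"
    using rs by (simp add: line_proj_def)
  show "(line_proj a + line_proj b + line_proj c) $$ (r, s) = diag_proj n {i0, i1, i2} $$ (r, s)"
  proof (cases "r \<in> {i0, i1, i2} \<and> s \<in> {i0, i1, i2}")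
    case False
    then have "(\<forall>v. lift_vec v r = 0) \<or> (\<forall>v. lift_vec v s = 0)" using lift_vec_simps(4) by blast
    then have "lift_vec a r * lift_vec a s = 0 \<and> lift_vec b r * lift_vec b s = 0 \<and> lift_vec c r * lift_vec c s = 0"
      by (elim disjE) (metis mult_zero_left mult_zero_right)+
    moreover have "diag_proj n {i0, i1, i2} $$ (r, s) = 0" using False rs by (auto simp: diag_proj_def)
    ultimately show ?thesis unfolding lhs by auto
  next
    case True
    define k where "k = (if r = i0 then 0 else if r = i1 then 1 else (2::nat))"
    define l where "l = (if s = i0 then 0 else if s = i1 then 1 else (2::nat))"
    have kl: "k \<in> {0, 1, 2}" "l \<in> {0, 1, 2}" unfolding k_def l_def by auto
    have coords: "\<And>v. lift_vec v r = coord v k" "\<And>v. lift_vec v s = coord v l"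
      using True distinct unfolding k_def l_def lift_vec_def coord_def by auto
    have diag: "(r = s) = (k = l)" using True distinct unfolding k_def l_def by auto
    have int_eq: "coord a k * coord a l * sqnorm b * sqnorm c + coord b k * coord b l * sqnorm a * sqnorm c
      + coord c k * coord c l * sqnorm a * sqnorm b = (if k = l then sqnorm a * sqnorm b * sqnorm c else 0)"
      using res kl unfolding resolves_identity_def by blast
    have "of_int (coord a k * coord a l) * of_int (sqnorm b) * of_int (sqnorm c)
      + of_int (coord b k * coord b l) * of_int (sqnorm a) * of_int (sqnorm c)
      + of_int (coord c k * coord c l) * of_int (sqnorm a) * of_int (sqnorm b)
      = (if k = l then of_int (sqnorm a) * of_int (sqnorm b) * of_int (sqnorm c) else (0::complex))"
      using arg_cong[OF int_eq, of "of_int :: int \<Rightarrow> complex"] by (auto split: if_splits)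
    then have "(line_proj a + line_proj b + line_proj c) $$ (r, s) = (if k = l then 1 else 0)"
      unfolding lhs coords using nz by (auto simp: field_simps split: if_splits)
    then show ?thesis using True rs diag by (auto simp: diag_proj_def)
  qed
qed (auto simp: line_proj_def diag_proj_def)

end

section \<open>Frame-valued valuations on projections are trivial\<close>

locale proj_valuation = frame_lattice +
  fixes n :: nat and u :: "complex mat \<Rightarrow> 'a"
  assumes val_C: "p \<in> projections n \<Longrightarrow> u p \<in> C"
    and val_zero: "u (0\<^sub>m n n) = fbot L"
    and val_one: "u (1\<^sub>m n) = ftop L"
    and val_meet: "p \<in> projections n \<Longrightarrow> q \<in> projections n \<Longrightarrow> p * q = q * p \<Longrightarrow>
      u (p * q) = fmeet L (u p) (u q)"
    and val_join: "p \<in> projections n \<Longrightarrow> q \<in> projections n \<Longrightarrow> p * q = q * p \<Longrightarrow>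
      u (p + q - p * q) = fSup L {u p, u q}"
begin

lemma val_compl:
  assumes p: "p \<in> projections n"
  shows "fSup L {u p, u (1\<^sub>m n - p)} = ftop L" "fmeet L (u p) (u (1\<^sub>m n - p)) = fbot L"
proof -
  note pc = projection_carrier[OF p]
  have comm: "p * (1\<^sub>m n - p) = (1\<^sub>m n - p) * p"
    using mat_commute_closed(3)[OF pc pc pc] by simp
  show "fSup L {u p, u (1\<^sub>m n - p)} = ftop L"
    using val_join[OF p projections_compl[OF p] comm] mat_compl(2)[OF pc projection_idem[OF p]] val_one
    by simp
  show "fmeet L (u p) (u (1\<^sub>m n - p)) = fbot L"
    using val_meet[OF p projections_compl[OF p] comm] mat_compl(1)[OF pc projection_idem[OF p]] val_zero
    by simp
qed

lemma val_orthogonal: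
  assumes p: "p \<in> projections n" and q: "q \<in> projections n"
    and orth: "p * q = 0\<^sub>m n n" "q * p = 0\<^sub>m n n"
  shows "p + q \<in> projections n" "u (p + q) = fSup L {u p, u q}" "fmeet L (u p) (u q) = fbot L"
proof -
  have sum: "p + q - p * q = p + q"
    using orth mat_minus_zero[OF add_carrier_mat[OF projection_carrier[OF q]]]
    by simp
  show "p + q \<in> projections n" using projections_join[OF p q] orth sum by simp
  show "u (p + q) = fSup L {u p, u q}" using val_join[OF p q] orth sum by simp
  show "fmeet L (u p) (u q) = fbot L" using val_meet[OF p q] orth val_zero by simp
qed

lemma val_orthogonal_triple:
  assumes p: "p \<in> projections n" and q: "q \<in> projections n" and r: "r \<in> projections n"
    and pq: "p * q = 0\<^sub>m n n" "q * p = 0\<^sub>m n n"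
    and pr: "p * r = 0\<^sub>m n n" "r * p = 0\<^sub>m n n"
    and qr: "q * r = 0\<^sub>m n n" "r * q = 0\<^sub>m n n"
  shows "u (p + q + r) = fSup L {fSup L {u p, u q}, u r}"
proof -
  note c = projection_carrier[OF p] projection_carrier[OF q] projection_carrier[OF r]
  note Vpq = val_orthogonal[OF p q pq]
  have "(p + q) * r = 0\<^sub>m n n" "r * (p + q) = 0\<^sub>m n n"
    using add_mult_distrib_mat[OF c] mult_add_distrib_mat[OF c(3,1,2)] pr qr by simp_all
  then show ?thesis using val_orthogonal(2)[OF Vpq(1) r] Vpq(2) by simp
qed

text \<open>Realising the Kochen--Specker configuration in three coordinates of C^n and
  applying the frame-valued Kochen--Specker lemma.\<close>

lemma val_diag3_bot:
  assumes D: "i0 < n" "i1 < n" "i2 < n" "i0 \<noteq> i1" "i0 \<noteq> i2" "i1 \<noteq> i2"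
  shows "u (diag_proj n {i0, i1, i2}) \<preceq> fbot L"
proof -
  define V where "V i = line_proj n i0 i1 i2 (ks_vectors ! i)" for i
  define x where "x i = (if i < 31 then u (V i) else ftop L)" for i
  define y where "y i = (if i < 31 then u (1\<^sub>m n - V i) else fbot L)" for i
  have V: "V i \<in> projections n" if "i < 31" for i
    unfolding V_def using line_proj_projection[OF D] ks_vectors_nonzero that ks_vectors_length
    by (metis nth_mem)
  have orth: "V i * V j = 0\<^sub>m n n" "V j * V i = 0\<^sub>m n n"
    if "dot (ks_vectors ! i) (ks_vectors ! j) = 0" for i j
    unfolding V_def using line_proj_orthogonal[OF D] that dot_sym by metis+
  show ?thesis
  proof (rule ks_frame_bot)
    show "x i \<in> C" "y i \<in> C" for i
      unfolding x_def y_def using val_C V projections_compl top_C bot_C by auto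
    show "u (diag_proj n {i0, i1, i2}) \<in> C" by (rule val_C[OF diag_proj_projection])
    show "fSup L {x i, y i} = ftop L" for i
      unfolding x_def y_def using val_compl(1)[OF V] join_top_bot by simp
    show "fmeet L (x i) (y i) = fbot L" if "i < 31" for i
      unfolding x_def y_def using val_compl(2)[OF V[OF that]] that by simp
  next
    fix i j assume "(i, j) \<in> set ks_pairs"
    then have ij: "i < 31" "j < 31" "dot (ks_vectors ! i) (ks_vectors ! j) = 0"
      using ks_pairs_orthogonal by auto
    then show "fmeet L (x i) (x j) = fbot L"
      using val_orthogonal(3)[OF V[OF ij(1)] V[OF ij(2)] orth[OF ij(3)]] ij unfolding x_def by simp
  next
    fix i j k assume "(i, j, k) \<in> set ks_bases"
    then have ijk: "i < 31" "j < 31" "k < 31"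
      "dot (ks_vectors ! i) (ks_vectors ! j) = 0" "dot (ks_vectors ! i) (ks_vectors ! k) = 0"
      "dot (ks_vectors ! j) (ks_vectors ! k) = 0"
      "resolves_identity (ks_vectors ! i) (ks_vectors ! j) (ks_vectors ! k)"
      using ks_bases_orthogonal by auto
    have "V i + V j + V k = diag_proj n {i0, i1, i2}"
      unfolding V_def using ijk ks_vectors_nonzero ks_vectors_length
      by (intro line_proj_basis[OF D]) (metis nth_mem)+
    then show "u (diag_proj n {i0, i1, i2}) = fSup L {fSup L {x i, x j}, x k}"
      using val_orthogonal_triple[OF V V V orth[OF ijk(4)] orth[OF ijk(5)] orth[OF ijk(6)]] ijk
      unfolding x_def by simp
  qed
qed

text \<open>For n \<ge> 3 every coordinate lies in some triple of distinct coordinates, so each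
  diagonal unit, and hence every diagonal projection, is sent to bottom.\<close>

lemma val_diag1_bot:
  assumes n: "n \<ge> 3" and i: "i < n"
  shows "u (diag_proj n {i}) \<preceq> fbot L"
proof -
  define j where "j = (if i = 0 then 1 else (0::nat))"
  define k where "k = (if i \<le> 1 then 2 else (1::nat))"
  have jk: "j < n" "k < n" "i \<noteq> j" "i \<noteq> k" "j \<noteq> k" using n unfolding j_def k_def by auto
  have "diag_proj n {i} = diag_proj n {i} * diag_proj n {i, j, k}"
    by (simp add: diag_proj_mult)
  then have "u (diag_proj n {i}) = fmeet L (u (diag_proj n {i})) (u (diag_proj n {i, j, k}))"
    using val_meet[OF diag_proj_projection diag_proj_projection diag_proj_comm[of n "{i}" "{i, j, k}"]]
    by simp
  also have "\<dots> \<preceq> fbot L"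
    using val_C[OF diag_proj_projection]
    by (intro trans[OF meet_C _ bot_C meet_le2 val_diag3_bot[OF i jk]]) auto
  finally show ?thesis .
qed

lemma val_diag_bot:
  assumes n: "n \<ge> 3"
  shows "finite S \<Longrightarrow> S \<subseteq> {0..<n} \<Longrightarrow> u (diag_proj n S) \<preceq> fbot L"
proof (induction S rule: finite_induct)
  case empty
  show ?case using refl[OF bot_C] by (simp add: diag_proj_empty val_zero)
next
  case (insert i S)
  have "u (diag_proj n (insert i S)) = fSup L {u (diag_proj n {i}), u (diag_proj n S)}"
    using val_join[OF diag_proj_projection diag_proj_projection diag_proj_comm[of n "{i}" S]]
      diag_proj_join[of n "{i}" S] by simp
  also have "\<dots> \<preceq> fbot L"
    using insert val_diag1_bot[OF n] by (intro join_least val_C diag_proj_projection bot_C) auto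
  finally show ?case .
qed

theorem val_trivial:
  assumes "n \<ge> 3"
  shows "trivial_frame L"
proof -
  have "ftop L \<preceq> fbot L" using val_diag_bot[OF assms, of "{0..<n}"] by (simp add: diag_proj_all val_one)
  then show ?thesis
    unfolding trivial_frame_def using antisym[OF bot_C top_C bot_le[OF top_C]] by simp
qed

end


section \<open>Principal ideals of the boolean subalgebras\<close>

text \<open>In the boolean algebra dcomm n X, the principal ideal of p consists of the
  elements below p.  Principal ideals compute joins, meets, bottom and top of the
  frame of ideals, so p \<mapsto> principal ideal of p is a lattice embedding.\<close>

definition principal :: "complex mat set \<Rightarrow> complex mat \<Rightarrow> complex mat set" where
  "principal T p = {q \<in> T. q * p = q}"

lemma Idl_simps[simp]: "fcarrier (Idl B) = ideals B" "fle (Idl B) = (\<subseteq>)"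
  by (simp_all add: Idl_def)

lemma Idl_fSup_eq: "is_lub (Idl B) X s \<Longrightarrow> fSup (Idl B) X = s"
  unfolding fSup_def by (rule the_equality) (auto simp: is_lub_def intro: subset_antisym)

lemma Idl_fmeet_eq: "is_glb (Idl B) {a, b} s \<Longrightarrow> fmeet (Idl B) a b = s"
  unfolding fmeet_def by (rule the_equality) (auto simp: is_glb_def intro: subset_antisym)

lemma ideals_proj_sub: "I \<in> ideals (proj_sub n T) \<longleftrightarrow> I \<subseteq> T \<and> 0\<^sub>m n n \<in> I \<and>
     (\<forall>a\<in>I. \<forall>b\<in>T. b * a = b \<longrightarrow> b \<in> I) \<and> (\<forall>a\<in>I. \<forall>b\<in>I. a + b - a * b \<in> I)"
  by (simp add: ideals_def)

context
  fixes n X assumes X: "commuting n X"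
begin

abbreviation "TX \<equiv> dcomm n X"
abbreviation "BX \<equiv> proj_sub n (dcomm n X)"

lemma principal_ideal:
  assumes p: "p \<in> TX"
  shows "principal TX p \<in> ideals BX"
  unfolding ideals_proj_sub
proof (intro conjI ballI impI)
  show "principal TX p \<subseteq> TX" by (auto simp: principal_def)
  show "0\<^sub>m n n \<in> principal TX p" using dcomm_zero dcomm_carrier[OF p] by (auto simp: principal_def)
  fix a b assume a: "a \<in> principal TX p"
  have a1: "a \<in> TX" "a * p = a" using a by (auto simp: principal_def)
  { assume b: "b \<in> TX" "b * a = b"
    have "b * p = b * a * p" using b by simp
    also have "\<dots> = b * (a * p)"
      using assoc_mult_mat[OF dcomm_carrier[OF b(1)] dcomm_carrier[OF a1(1)] dcomm_carrier[OF p]] .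
    also have "\<dots> = b" using a b by (simp add: principal_def)
    finally show "b \<in> principal TX p" using b by (simp add: principal_def) }
  { assume b: "b \<in> principal TX p"
    have "(a + b - a * b) * p = a + b - a * b"
      by (rule mat_join_le) (use a b dcomm_carrier p in \<open>auto simp: principal_def\<close>)
    moreover have "a + b - a * b \<in> TX" using dcomm_join[OF X] a b by (auto simp: principal_def)
    ultimately show "a + b - a * b \<in> principal TX p" by (simp add: principal_def) }
qed

lemma principal_self: "p \<in> TX \<Longrightarrow> p \<in> principal TX p"
  using dcomm_idem by (simp add: principal_def)

lemma principal_le_join:
  assumes p: "p \<in> TX" and q: "q \<in> TX"
  shows "principal TX p \<subseteq> principal TX (p + q - p * q)"
  unfolding principal_def
  using mat_le_join[OF dcomm_carrier dcomm_carrier[OF p] dcomm_carrier[OF q]] by auto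

lemma principal_meet_le:
  assumes p: "p \<in> TX" and q: "q \<in> TX"
  shows "principal TX (p * q) \<subseteq> principal TX p"
  unfolding principal_def
  using mat_meet_le[OF dcomm_carrier dcomm_carrier[OF p] dcomm_carrier[OF q] dcomm_idem[OF p]
      dcomm_comm[OF X p q]] by auto

lemma principal_join:
  assumes p: "p \<in> TX" and q: "q \<in> TX"
  shows "fSup (Idl BX) {principal TX p, principal TX q} = principal TX (p + q - p * q)"
proof (rule Idl_fSup_eq)
  have sym: "p + q - p * q = q + p - q * p"
    by (rule mat_join_comm[OF dcomm_carrier[OF p] dcomm_carrier[OF q] dcomm_comm[OF X p q]])
  show "is_lub (Idl BX) {principal TX p, principal TX q} (principal TX (p + q - p * q))"
    unfolding is_lub_def Idl_simps
  proof (intro conjI ballI impI)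
    show "principal TX (p + q - p * q) \<in> ideals BX" by (rule principal_ideal[OF dcomm_join[OF X p q]])
    show "J \<subseteq> principal TX (p + q - p * q)" if "J \<in> {principal TX p, principal TX q}" for J
      using that principal_le_join[OF p q] principal_le_join[OF q p] unfolding sym[symmetric] by blast
  next
    fix J assume J: "J \<in> ideals BX" "\<forall>x\<in>{principal TX p, principal TX q}. x \<subseteq> J"
    then have "p \<in> J" "q \<in> J" using principal_self p q by auto
    then have "p + q - p * q \<in> J" using J(1) unfolding ideals_proj_sub by blast
    then show "principal TX (p + q - p * q) \<subseteq> J"
      using J(1) unfolding ideals_proj_sub principal_def by blast
  qed
qed

lemma principal_meet:
  assumes p: "p \<in> TX" and q: "q \<in> TX"
  shows "fmeet (Idl BX) (principal TX p) (principal TX q) = principal TX (p * q)"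
proof (rule Idl_fmeet_eq)
  show "is_glb (Idl BX) {principal TX p, principal TX q} (principal TX (p * q))"
    unfolding is_glb_def Idl_simps
  proof (intro conjI ballI impI)
    show "principal TX (p * q) \<in> ideals BX" by (rule principal_ideal[OF dcomm_meet[OF X p q]])
    show "principal TX (p * q) \<subseteq> J" if "J \<in> {principal TX p, principal TX q}" for J
      using that principal_meet_le[OF p q] principal_meet_le[OF q p]
      unfolding dcomm_comm[OF X q p] by blast
  next
    fix J assume J: "J \<in> ideals BX" "\<forall>x\<in>{principal TX p, principal TX q}. J \<subseteq> x"
    show "J \<subseteq> principal TX (p * q)"
    proof
      fix a assume "a \<in> J"
      then have a: "a \<in> TX" "a * p = a" "a * q = a" using J by (auto simp: principal_def)
      have "a * (p * q) = a * p * q"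
        using assoc_mult_mat[OF dcomm_carrier[OF a(1)] dcomm_carrier[OF p] dcomm_carrier[OF q]] by simp
      then show "a \<in> principal TX (p * q)" using a by (simp add: principal_def)
    qed
  qed
qed

lemma principal_zero: "fbot (Idl BX) = principal TX (0\<^sub>m n n)"
  unfolding fbot_def
proof (rule Idl_fSup_eq)
  show "is_lub (Idl BX) {} (principal TX (0\<^sub>m n n))"
    unfolding is_lub_def Idl_simps
  proof (intro conjI ballI impI)
    show "principal TX (0\<^sub>m n n) \<in> ideals BX" by (rule principal_ideal[OF dcomm_zero])
    fix J assume J: "J \<in> ideals BX"
    show "principal TX (0\<^sub>m n n) \<subseteq> J"
    proof
      fix a assume "a \<in> principal TX (0\<^sub>m n n)"
      then have "a \<in> TX" "a * 0\<^sub>m n n = a" by (auto simp: principal_def)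
      then have "a = 0\<^sub>m n n"
        using right_mult_zero_mat[OF dcomm_carrier[OF \<open>a \<in> TX\<close>], of n] by simp
      then show "a \<in> J" using J unfolding ideals_proj_sub by blast
    qed
  qed simp
qed

lemma principal_one: "ftop (Idl BX) = principal TX (1\<^sub>m n)"
  unfolding ftop_def
proof (rule Idl_fSup_eq)
  have e: "principal TX (1\<^sub>m n) = TX"
    using right_mult_one_mat[OF dcomm_carrier] by (auto simp: principal_def)
  show "is_lub (Idl BX) (fcarrier (Idl BX)) (principal TX (1\<^sub>m n))"
    unfolding is_lub_def Idl_simps
  proof (intro conjI ballI impI)
    show "principal TX (1\<^sub>m n) \<in> ideals BX" by (rule principal_ideal[OF dcomm_one])
    fix J assume "J \<in> ideals BX"
    then show "J \<subseteq> principal TX (1\<^sub>m n)" unfolding e ideals_proj_sub by blast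
  next
    fix J assume "J \<in> ideals BX" "\<forall>x\<in>ideals BX. x \<subseteq> J"
    then show "principal TX (1\<^sub>m n) \<subseteq> J" using principal_ideal[OF dcomm_one] by blast
  qed
qed

end

lemma Idl_map_inclusion_principal:
  assumes sub: "T0 \<subseteq> T" and T: "T \<subseteq> projections n" and p: "p \<in> T0"
  shows "Idl_map (proj_sub n T0) (proj_sub n T) (restrict id T0) (principal T0 p) = principal T p"
proof
  have car: "\<And>a. a \<in> T \<Longrightarrow> a \<in> carrier_mat n n" using T projection_carrier by blast
  show "Idl_map (proj_sub n T0) (proj_sub n T) (restrict id T0) (principal T0 p) \<subseteq> principal T p"
  proof
    fix b assume "b \<in> Idl_map (proj_sub n T0) (proj_sub n T) (restrict id T0) (principal T0 p)"
    then obtain a where b: "b \<in> T" and a: "a \<in> T0" "a * p = a" and ba: "b * a = b"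
      unfolding Idl_map_def principal_def by auto
    have "b * p = b * a * p" using ba by simp
    also have "\<dots> = b * (a * p)" using assoc_mult_mat[OF car car car] b a sub p by blast
    finally show "b \<in> principal T p" using a ba b by (simp add: principal_def)
  qed
  show "principal T p \<subseteq> Idl_map (proj_sub n T0) (proj_sub n T) (restrict id T0) (principal T0 p)"
  proof
    fix b assume "b \<in> principal T p"
    moreover have "p * p = p" using p sub T projection_idem by blast
    ultimately show "b \<in> Idl_map (proj_sub n T0) (proj_sub n T) (restrict id T0) (principal T0 p)"
      using p unfolding Idl_map_def principal_def by auto
  qed
qed


section \<open>A functor extending the Stone spectrum yields a valuation\<close>

text \<open>F is a functor PBoolean^op \<rightarrow> Loc, written covariantly on frames, together with
  a natural isomorphism \<eta> from F to the frame of ideals on boolean algebras.\<close>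

locale stone_extension =
  fixes F :: "complex mat pba \<Rightarrow> 'f frame"
    and Fm :: "complex mat pba \<Rightarrow> complex mat pba \<Rightarrow> (complex mat \<Rightarrow> complex mat) \<Rightarrow> 'f \<Rightarrow> 'f"
    and \<eta> :: "complex mat pba \<Rightarrow> 'f \<Rightarrow> complex mat set"
    and n :: nat
  assumes is_functor: "is_PBool_Loc_functor F Fm"
    and iso: "nat_iso_to_Stone F Fm \<eta>"
begin

abbreviation "L \<equiv> F (Proj n)"

lemma F_frame: "is_pba A \<Longrightarrow> is_frame (F A)"
  using is_functor unfolding is_PBool_Loc_functor_def by blast

lemma Fm_hom: "is_pba A \<Longrightarrow> is_pba B \<Longrightarrow> pba_hom A B f \<Longrightarrow> frame_hom (F A) (F B) (Fm A B f)"
  using is_functor unfolding is_PBool_Loc_functor_def by blast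

lemma Fm_comp: "is_pba A \<Longrightarrow> is_pba B \<Longrightarrow> is_pba C \<Longrightarrow> pba_hom A B f \<Longrightarrow> pba_hom B C g \<Longrightarrow>
   x \<in> fcarrier (F A) \<Longrightarrow> Fm A C (compose (pcarrier A) g f) x = Fm B C g (Fm A B f x)"
  using is_functor unfolding is_PBool_Loc_functor_def by blast

lemma eta_hom: "is_boolean B \<Longrightarrow> frame_hom (F B) (Idl B) (\<eta> B)"
  and eta_bij: "is_boolean B \<Longrightarrow> bij_betw (\<eta> B) (fcarrier (F B)) (ideals B)"
  using iso unfolding nat_iso_to_Stone_def by blast+

lemma eta_natural: "is_boolean B \<Longrightarrow> is_boolean B' \<Longrightarrow> pba_hom B B' f \<Longrightarrow> x \<in> fcarrier (F B) \<Longrightarrow>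
   \<eta> B' (Fm B B' f x) = Idl_map B B' f (\<eta> B x)"
  using iso unfolding nat_iso_to_Stone_def by blast

lemma L_frame: "is_frame L"
  using F_frame[OF Proj_pba] .

definition eta_inv :: "complex mat pba \<Rightarrow> complex mat set \<Rightarrow> 'f" where
  "eta_inv B I = inv_into (fcarrier (F B)) (\<eta> B) I"

definition push :: "complex mat set \<Rightarrow> complex mat set \<Rightarrow> 'f" where
  "push X I = Fm (proj_sub n (dcomm n X)) (Proj n) (restrict id (dcomm n X)) (eta_inv (proj_sub n (dcomm n X)) I)"

context
  fixes X assumes X: "commuting n X"
begin

abbreviation "B \<equiv> proj_sub n (dcomm n X)"

lemma B_boolean: "is_boolean B" and B_pba: "is_pba B"
  using dcomm_boolean[OF X] dcomm_pba[OF X] .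

lemma eta_inv_C: "I \<in> ideals B \<Longrightarrow> eta_inv B I \<in> fcarrier (F B)"
  unfolding eta_inv_def using eta_bij[OF B_boolean] by (metis bij_betw_def inv_into_into)

lemma eta_eta_inv: "I \<in> ideals B \<Longrightarrow> \<eta> B (eta_inv B I) = I"
  unfolding eta_inv_def using eta_bij[OF B_boolean] by (metis bij_betw_def f_inv_into_f)

lemma eta_inv_eta: "x \<in> fcarrier (F B) \<Longrightarrow> eta_inv B (\<eta> B x) = x"
  unfolding eta_inv_def using eta_bij[OF B_boolean] by (metis bij_betw_def inv_into_f_f)

text \<open>As the inverse of a frame isomorphism, eta_inv preserves joins, meets and top.\<close>

lemma eta_inv_sup:
  assumes S: "S \<subseteq> ideals B"
  shows "eta_inv B (fSup (Idl B) S) = fSup (F B) (eta_inv B ` S)"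
proof -
  interpret FB: frame_lattice "F B" using F_frame[OF B_pba] by (simp add: frame_lattice_def)
  have Y: "eta_inv B ` S \<subseteq> fcarrier (F B)" using eta_inv_C S by blast
  have "\<eta> B (fSup (F B) (eta_inv B ` S)) = fSup (Idl B) (\<eta> B ` eta_inv B ` S)"
    using eta_hom[OF B_boolean] Y unfolding frame_hom_def by blast
  also have "\<eta> B ` eta_inv B ` S = S" using eta_eta_inv S by (force simp: image_image)
  finally show ?thesis using eta_inv_eta[OF FB.sup_C[OF Y]] by simp
qed

lemma eta_inv_meet:
  assumes I: "I \<in> ideals B" and J: "J \<in> ideals B"
  shows "eta_inv B (fmeet (Idl B) I J) = fmeet (F B) (eta_inv B I) (eta_inv B J)"
proof -
  interpret FB: frame_lattice "F B" using F_frame[OF B_pba] by (simp add: frame_lattice_def)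
  have "\<eta> B (fmeet (F B) (eta_inv B I) (eta_inv B J))
      = fmeet (Idl B) (\<eta> B (eta_inv B I)) (\<eta> B (eta_inv B J))"
    using eta_hom[OF B_boolean] eta_inv_C[OF I] eta_inv_C[OF J] unfolding frame_hom_def by blast
  then have "\<eta> B (fmeet (F B) (eta_inv B I) (eta_inv B J)) = fmeet (Idl B) I J"
    using eta_eta_inv I J by simp
  then show ?thesis using eta_inv_eta[OF FB.meet_C[OF eta_inv_C[OF I] eta_inv_C[OF J]]] by simp
qed

lemma eta_inv_top: "eta_inv B (ftop (Idl B)) = ftop (F B)"
proof -
  interpret FB: frame_lattice "F B" using F_frame[OF B_pba] by (simp add: frame_lattice_def)
  have "\<eta> B (ftop (F B)) = ftop (Idl B)" using eta_hom[OF B_boolean] unfolding frame_hom_def by blast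
  then show ?thesis using eta_inv_eta[OF FB.top_C] by simp
qed

lemma Fm_inclusion: "frame_hom (F B) L (Fm B (Proj n) (restrict id (dcomm n X)))"
  by (rule Fm_hom[OF B_pba Proj_pba dcomm_inclusion_Proj[OF X]])

lemma push_C: "I \<in> ideals B \<Longrightarrow> push X I \<in> fcarrier L"
  unfolding push_def using Fm_inclusion eta_inv_C unfolding frame_hom_def by blast

lemma push_sup:
  assumes S: "S \<subseteq> ideals B"
  shows "push X (fSup (Idl B) S) = fSup L (push X ` S)"
proof -
  have Y: "eta_inv B ` S \<subseteq> fcarrier (F B)" using eta_inv_C S by blast
  have "push X (fSup (Idl B) S) = Fm B (Proj n) (restrict id (dcomm n X)) (fSup (F B) (eta_inv B ` S))"
    unfolding push_def using eta_inv_sup[OF S] by simp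
  also have "\<dots> = fSup L (Fm B (Proj n) (restrict id (dcomm n X)) ` eta_inv B ` S)"
    using Fm_inclusion Y unfolding frame_hom_def by blast
  also have "\<dots> = fSup L (push X ` S)" unfolding push_def by (simp add: image_image)
  finally show ?thesis .
qed

lemma push_meet:
  assumes I: "I \<in> ideals B" and J: "J \<in> ideals B"
  shows "push X (fmeet (Idl B) I J) = fmeet L (push X I) (push X J)"
  unfolding push_def eta_inv_meet[OF I J]
  using Fm_inclusion eta_inv_C[OF I] eta_inv_C[OF J] unfolding frame_hom_def by blast

lemma push_top: "push X (ftop (Idl B)) = ftop L"
  unfolding push_def eta_inv_top using Fm_inclusion unfolding frame_hom_def by blast

lemma push_principal_join:
  assumes p: "p \<in> dcomm n X" and q: "q \<in> dcomm n X"
  shows "push X (principal (dcomm n X) (p + q - p * q))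
    = fSup L {push X (principal (dcomm n X) p), push X (principal (dcomm n X) q)}"
  using principal_join[OF X p q] push_sup[of "{principal (dcomm n X) p, principal (dcomm n X) q}"]
    principal_ideal[OF X p] principal_ideal[OF X q] by simp

lemma push_principal_meet:
  assumes p: "p \<in> dcomm n X" and q: "q \<in> dcomm n X"
  shows "push X (principal (dcomm n X) (p * q))
    = fmeet L (push X (principal (dcomm n X) p)) (push X (principal (dcomm n X) q))"
  using principal_meet[OF X p q] push_meet[OF principal_ideal[OF X p] principal_ideal[OF X q]] by simp

lemma push_principal_zero: "push X (principal (dcomm n X) (0\<^sub>m n n)) = fbot L"
  using principal_zero[OF X] push_sup[of "{}"] by (simp add: fbot_def)

lemma push_principal_one: "push X (principal (dcomm n X) (1\<^sub>m n)) = ftop L"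
  using principal_one[OF X] push_top by simp

lemma Fm_inclusion_principal:
  assumes X0: "commuting n X0" and sub: "dcomm n X0 \<subseteq> dcomm n X" and p: "p \<in> dcomm n X0"
  shows "Fm (proj_sub n (dcomm n X0)) B (restrict id (dcomm n X0))
      (eta_inv (proj_sub n (dcomm n X0)) (principal (dcomm n X0) p))
    = eta_inv B (principal (dcomm n X) p)"
proof -
  let ?B0 = "proj_sub n (dcomm n X0)" and ?i = "restrict id (dcomm n X0)"
  let ?x = "eta_inv ?B0 (principal (dcomm n X0) p)"
  have f: "pba_hom ?B0 B ?i" by (rule dcomm_inclusion_hom[OF X0 sub])
  have x: "?x \<in> fcarrier (F ?B0)"
    using stone_extension.eta_inv_C[OF stone_extension_axioms X0 principal_ideal[OF X0 p]] .
  have "Fm ?B0 B ?i ?x \<in> fcarrier (F B)"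
    using Fm_hom[OF dcomm_pba[OF X0] B_pba f] x unfolding frame_hom_def by blast
  moreover have "\<eta> B (Fm ?B0 B ?i ?x) = principal (dcomm n X) p"
    using eta_natural[OF dcomm_boolean[OF X0] B_boolean f x]
      stone_extension.eta_eta_inv[OF stone_extension_axioms X0 principal_ideal[OF X0 p]]
      Idl_map_inclusion_principal[OF sub dcomm_projections p] by simp
  ultimately show ?thesis using eta_inv_eta by metis
qed

end

text \<open>The valuation: val p is the image of the principal ideal of p in the boolean
  subalgebra generated by p.  By naturality it may be computed in any boolean
  subalgebra dcomm n X containing p.\<close>

definition val :: "complex mat \<Rightarrow> 'f" where
  "val p = push {p} (principal (dcomm n {p}) p)"

lemma push_principal_eq_val:
  assumes X: "commuting n X" and p: "p \<in> dcomm n X"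
  shows "push X (principal (dcomm n X) p) = val p"
proof -
  have X0: "commuting n {p}" using p dcomm_projections commuting_single by blast
  have sub: "dcomm n {p} \<subseteq> dcomm n X" by (rule dcomm_antimono[OF p])
  have p0: "p \<in> dcomm n {p}" using dcomm_contains[OF X0] by blast
  have comp: "compose (dcomm n {p}) (restrict id (dcomm n X)) (restrict id (dcomm n {p}))
      = restrict id (dcomm n {p})"
    unfolding compose_def by (rule restrict_ext) (use sub in auto)
  have "val p = Fm (proj_sub n (dcomm n X)) (Proj n) (restrict id (dcomm n X))
      (Fm (proj_sub n (dcomm n {p})) (proj_sub n (dcomm n X)) (restrict id (dcomm n {p}))
        (eta_inv (proj_sub n (dcomm n {p})) (principal (dcomm n {p}) p)))"
    unfolding val_def push_def
    using Fm_comp[OF dcomm_pba[OF X0] dcomm_pba[OF X] Proj_pba dcomm_inclusion_hom[OF X0 sub]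
        dcomm_inclusion_Proj[OF X] eta_inv_C[OF X0 principal_ideal[OF X0 p0]]] comp
    by simp
  also have "\<dots> = push X (principal (dcomm n X) p)"
    unfolding push_def Fm_inclusion_principal[OF X X0 sub p0] ..
  finally show ?thesis by simp
qed

lemma val_is_valuation: "proj_valuation L n val"
proof (unfold_locales)
  show "is_frame L" by (rule L_frame)
  fix p assume p: "p \<in> projections n"
  show "val p \<in> fcarrier L"
    unfolding val_def
    using push_C[OF commuting_single[OF p] principal_ideal[OF commuting_single[OF p]]]
      dcomm_contains[OF commuting_single[OF p]] by blast
  fix q assume q: "q \<in> projections n" and pq: "p * q = q * p"
  have X: "commuting n {p, q}" by (rule commuting_pair[OF p q pq])
  have pq_in: "p \<in> dcomm n {p, q}" "q \<in> dcomm n {p, q}" using dcomm_contains[OF X] by auto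
  show "val (p * q) = fmeet L (val p) (val q)"
    using push_principal_meet[OF X pq_in] push_principal_eq_val[OF X] pq_in dcomm_meet[OF X pq_in]
    by simp
  show "val (p + q - p * q) = fSup L {val p, val q}"
    using push_principal_join[OF X pq_in] push_principal_eq_val[OF X] pq_in dcomm_join[OF X pq_in]
    by simp
next
  show "val (0\<^sub>m n n) = fbot L"
    using push_principal_zero[OF commuting_empty] push_principal_eq_val[OF commuting_empty dcomm_zero]
    by simp
  show "val (1\<^sub>m n) = ftop L"
    using push_principal_one[OF commuting_empty] push_principal_eq_val[OF commuting_empty dcomm_one]
    by simp
qed

end

theorem mainTheorem9:
  fixes F :: "complex mat pba \<Rightarrow> 'f frame"
    and Fm :: "complex mat pba \<Rightarrow> complex mat pba \<Rightarrow> (complex mat \<Rightarrow> complex mat) \<Rightarrow> 'f \<Rightarrow> 'f"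
    and \<eta> :: "complex mat pba \<Rightarrow> 'f \<Rightarrow> complex mat set"
    and n :: nat
  assumes "is_PBool_Loc_functor F Fm"
    and "nat_iso_to_Stone F Fm \<eta>"
    and "n \<ge> 3"
  shows "trivial_frame (F (Proj n))"
proof -
  interpret stone_extension F Fm \<eta> n
    using assms(1,2) by (rule stone_extension.intro)
  interpret proj_valuation "F (Proj n)" n val
    by (rule val_is_valuation)
  show ?thesis
    by (rule val_trivial[OF assms(3)])
qed

end
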